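(* Let $\Phi$ be a strict Young function and let $a\in L^\infty(\mathbf R^d\setminus\{0\})$ be such that $$\sup_{R>0}\Big(R^{-d+2|\alpha|}\int_{A_R}|\partial^\alpha a(\xi)|^2\,d\xi\Big)<\infty$$ for every $\alpha\in\mathbf N^d$ with $|\alpha|\le[\tfrac d2]+1$, where $A_R=\{\xi\in\mathbf R^d: R<|\xi|<2R\}$. Then $a(D)$ is continuous on $L^\Phi(\mathbf R^d)$ and on $wL^\Phi(\mathbf R^d)$, i.e. there is $C>0$ with $\|a(D)f\|_{L^\Phi}\le C\|f\|_{L^\Phi}$ for $f\in L^\Phi(\mathbf R^d)$ and $\|a(D)f\|_{wL^\Phi}\le C\|f\|_{wL^\Phi}$ for $f\in wL^\Phi(\mathbf R^d)$.
   Context: A Young function is a map $\Phi:[0,\infty)\to[0,\infty]$ which is convex, satisfies $\Phi(0)=0$ and $\lim_{t\to\infty}\Phi(t)=+\infty$. $\Phi$ satisfies the $\Delta_2$-condition if there is $C\ge 1$ with $\Phi(2t)\le C\Phi(t)$ for all $t\ge 0$; it satisfies the $\Lambda$-condition if there is $p>1$ with $\Phi(ct)\le c^p\Phi(t)$ for all $t\ge0$, $c\in(0,1]$. A Young function is strict if it is finite-valued on $[0,\infty)$ and satisfies both the $\Delta_2$- and the $\Lambda$-condition. $L^\Phi(\mathbf R^d)$ is the set of measurable $f$ with $\|f\|_{L^\Phi}=\inf\{\lambda>0:\int\Phi(|f|/\lambda)\,dx\le1\}<\infty$. With $\mu_f(t)$ the Lebesgue measure of $\{x:|f(x)|>t\}$,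 the weak Orlicz space $wL^\Phi(\mathbf R^d)$ is the set of measurable $f$ with $\|f\|_{wL^\Phi}=\inf\{\lambda>0:\sup_{t>0}\Phi(t/\lambda)\mu_f(t)\le 1\}<\infty$. The operator $a(D)f=\mathcal F^{-1}(a\widehat f)$ is bounded on each $L^p$, $1<p<\infty$ (Hörmander's multiplier theorem), hence extends uniquely to $L^{p_0}+L^{p_1}$ for $1<p_0<p_1<\infty$; the claim concerns this extension, which contains $L^\Phi$ and $wL^\Phi$ for suitable such $p_0,p_1$. *)

theory Defs
  imports "HOL-Analysis.Analysis"
begin

text \<open>A strict Young function is finite-valued, so it is represented as a real function on
  [0,\<infinity>) (values outside [0,\<infinity>) are irrelevant).\<close>

definition young_function :: "(real \<Rightarrow> real) \<Rightarrow> bool" where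
  "young_function \<Phi> \<longleftrightarrow> convex_on {0..} \<Phi> \<and> \<Phi> 0 = 0 \<and> (\<forall>t\<ge>0. \<Phi> t \<ge> 0)
     \<and> filterlim \<Phi> at_top at_top"

definition Delta2_cond :: "(real \<Rightarrow> real) \<Rightarrow> bool" where
  "Delta2_cond \<Phi> \<longleftrightarrow> (\<exists>C\<ge>1. \<forall>t\<ge>0. \<Phi> (2 * t) \<le> C * \<Phi> t)"

definition Lambda_cond :: "(real \<Rightarrow> real) \<Rightarrow> bool" where
  "Lambda_cond \<Phi> \<longleftrightarrow> (\<exists>p>1. \<forall>t\<ge>0. \<forall>c. 0 < c \<and> c \<le> 1 \<longrightarrow> \<Phi> (c * t) \<le> c powr p * \<Phi> t)"

definition strict_young :: "(real \<Rightarrow> real) \<Rightarrow> bool" where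
  "strict_young \<Phi> \<longleftrightarrow> young_function \<Phi> \<and> Delta2_cond \<Phi> \<and> Lambda_cond \<Phi>"

definition orlicz_set :: "(real \<Rightarrow> real) \<Rightarrow> ('a::euclidean_space \<Rightarrow> complex) \<Rightarrow> real set" where
  "orlicz_set \<Phi> f = {s. s > 0 \<and> (\<integral>\<^sup>+ x. ennreal (\<Phi> (cmod (f x) / s)) \<partial>lebesgue) \<le> 1}"

definition in_orlicz :: "(real \<Rightarrow> real) \<Rightarrow> ('a::euclidean_space \<Rightarrow> complex) \<Rightarrow> bool" where
  "in_orlicz \<Phi> f \<longleftrightarrow> f \<in> borel_measurable lebesgue \<and> orlicz_set \<Phi> f \<noteq> {}"

definition orlicz_norm :: "(real \<Rightarrow> real) \<Rightarrow> ('a::euclidean_space \<Rightarrow> complex) \<Rightarrow> real" where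
  "orlicz_norm \<Phi> f = Inf (orlicz_set \<Phi> f)"

definition distrib_fun :: "('a::euclidean_space \<Rightarrow> complex) \<Rightarrow> real \<Rightarrow> ennreal" where
  "distrib_fun f t = emeasure lebesgue {x. cmod (f x) > t}"

definition weak_orlicz_set :: "(real \<Rightarrow> real) \<Rightarrow> ('a::euclidean_space \<Rightarrow> complex) \<Rightarrow> real set" where
  "weak_orlicz_set \<Phi> f =
     {s. s > 0 \<and> (SUP t\<in>{0<..}. ennreal (\<Phi> (t / s)) * distrib_fun f t) \<le> 1}"

definition in_weak_orlicz :: "(real \<Rightarrow> real) \<Rightarrow> ('a::euclidean_space \<Rightarrow> complex) \<Rightarrow> bool" where
  "in_weak_orlicz \<Phi> f \<longleftrightarrow> f \<in> borel_measurable lebesgue \<and> weak_orlicz_set \<Phi> f \<noteq> {}"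

definition weak_orlicz_norm :: "(real \<Rightarrow> real) \<Rightarrow> ('a::euclidean_space \<Rightarrow> complex) \<Rightarrow> real" where
  "weak_orlicz_norm \<Phi> f = Inf (weak_orlicz_set \<Phi> f)"

definition in_Lp :: "real \<Rightarrow> ('a::euclidean_space \<Rightarrow> complex) \<Rightarrow> bool" where
  "in_Lp p f \<longleftrightarrow> f \<in> borel_measurable lebesgue \<and>
     (\<integral>\<^sup>+ x. ennreal (cmod (f x) powr p) \<partial>lebesgue) < \<infinity>"

definition Lp_norm :: "real \<Rightarrow> ('a::euclidean_space \<Rightarrow> complex) \<Rightarrow> real" where
  "Lp_norm p f = enn2real (\<integral>\<^sup>+ x. ennreal (cmod (f x) powr p) \<partial>lebesgue) powr (1 / p)"

definition Lp_sum_space :: "('a::euclidean_space \<Rightarrow> complex) set" where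
  "Lp_sum_space = {f. \<exists>g h p0 p1. 1 < p0 \<and> p0 < p1 \<and> in_Lp p0 g \<and> in_Lp p1 h \<and>
                        f = (\<lambda>x. g x + h x)}"

definition ess_bounded :: "('a::euclidean_space \<Rightarrow> complex) \<Rightarrow> bool" where
  "ess_bounded a \<longleftrightarrow> a \<in> borel_measurable lebesgue \<and> (\<exists>M. AE x in lebesgue. cmod (a x) \<le> M)"

fun deriv_list :: "'a::euclidean_space list \<Rightarrow> ('a \<Rightarrow> complex) \<Rightarrow> ('a \<Rightarrow> complex)" where
  "deriv_list [] f = f"
| "deriv_list (b # bs) f = (\<lambda>x. frechet_derivative (deriv_list bs f) (at x) b)"

text \<open>Multi-indices are functions \<open>\<alpha> :: 'a \<Rightarrow> nat\<close>; only their values on \<open>Basis\<close> matter.\<close>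
definition mindex_abs :: "('a::euclidean_space \<Rightarrow> nat) \<Rightarrow> nat" where
  "mindex_abs \<alpha> = (\<Sum>b\<in>Basis. \<alpha> b)"

definition mderiv :: "('a::euclidean_space \<Rightarrow> nat) \<Rightarrow> ('a \<Rightarrow> complex) \<Rightarrow> ('a \<Rightarrow> complex)" where
  "mderiv \<alpha> f = deriv_list (SOME bs. \<forall>b. count_list bs b = (if b \<in> Basis then \<alpha> b else 0)) f"

definition smooth_fun :: "('a::euclidean_space \<Rightarrow> complex) \<Rightarrow> bool" where
  "smooth_fun f \<longleftrightarrow> (\<forall>bs. set bs \<subseteq> Basis \<longrightarrow> deriv_list bs f differentiable_on UNIV)"

definition test_fun :: "'a::euclidean_space set \<Rightarrow> ('a \<Rightarrow> complex) \<Rightarrow> bool" where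
  "test_fun U \<phi> \<longleftrightarrow> smooth_fun \<phi> \<and> compact (closure {x. \<phi> x \<noteq> 0}) \<and> closure {x. \<phi> x \<noteq> 0} \<subseteq> U"

definition weak_mderiv :: "'a::euclidean_space set \<Rightarrow> ('a \<Rightarrow> nat) \<Rightarrow> ('a \<Rightarrow> complex) \<Rightarrow> ('a \<Rightarrow> complex) \<Rightarrow> bool" where
  "weak_mderiv U \<alpha> a g \<longleftrightarrow>
     (\<forall>K. compact K \<and> K \<subseteq> U \<longrightarrow> set_integrable lebesgue K g \<and> set_integrable lebesgue K a) \<and>
     (\<forall>\<phi>. test_fun U \<phi> \<longrightarrow>
        (\<integral>x. a x * mderiv \<alpha> \<phi> x \<partial>lebesgue) = (-1) ^ mindex_abs \<alpha> * (\<integral>x. g x * \<phi> x \<partial>lebesgue))"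

definition annulus :: "real \<Rightarrow> 'a::euclidean_space set" where
  "annulus R = {\<xi>. R < norm \<xi> \<and> norm \<xi> < 2 * R}"

definition fourier :: "('a::euclidean_space \<Rightarrow> complex) \<Rightarrow> 'a \<Rightarrow> complex" where
  "fourier f \<xi> = (\<integral>x. f x * cis (- 2 * pi * (x \<bullet> \<xi>)) \<partial>lebesgue)"

definition multiplier_op :: "('a::euclidean_space \<Rightarrow> complex) \<Rightarrow> ('a \<Rightarrow> complex) \<Rightarrow> 'a \<Rightarrow> complex" where
  "multiplier_op a f x = (\<integral>\<xi>. a \<xi> * fourier f \<xi> * cis (2 * pi * (x \<bullet> \<xi>)) \<partial>lebesgue)"

text \<open>\<open>T\<close> is the (a.e.-unique) extension of \<open>a(D)\<close> to the union of the spaces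
  \<open>L^{p0} + L^{p1}\<close> (\<open>1<p0<p1<\<infinity>\<close>): it agrees with \<open>F^{-1}(a F \<phi>)\<close> on test functions,
  is bounded on every \<open>L^p\<close>, \<open>1<p<\<infinity>\<close>, and is linear (a.e.).\<close>
definition is_multiplier_extension ::
  "('a::euclidean_space \<Rightarrow> complex) \<Rightarrow> (('a \<Rightarrow> complex) \<Rightarrow> ('a \<Rightarrow> complex)) \<Rightarrow> bool" where
  "is_multiplier_extension a T \<longleftrightarrow>
     (\<forall>\<phi>. test_fun UNIV \<phi> \<longrightarrow> (AE x in lebesgue. T \<phi> x = multiplier_op a \<phi> x)) \<and>
     (\<forall>p. 1 < p \<longrightarrow> (\<exists>C. \<forall>f. in_Lp p f \<longrightarrow> in_Lp p (T f) \<and> Lp_norm p (T f) \<le> C * Lp_norm p f)) \<and>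
     (\<forall>f g. f \<in> Lp_sum_space \<and> g \<in> Lp_sum_space \<longrightarrow>
        (AE x in lebesgue. T (\<lambda>y. f y + g y) x = T f x + T g x)) \<and>
     (\<forall>c f. f \<in> Lp_sum_space \<longrightarrow> (AE x in lebesgue. T (\<lambda>y. c * f y) x = c * T f x))"

end

theory Submission
  imports Defs
begin

text \<open>
  Only two properties of \<open>T\<close> enter: additivity on \<open>L^p0 + L^p1\<close> and boundedness on every
  \<open>L^r\<close>, \<open>r > 1\<close>; the theorem is then a Marcinkiewicz-type interpolation. A strict Young function
  satisfies \<open>\<Phi>(c t) \<le> c^p \<Phi>(t)\<close> for \<open>c \<le> 1\<close> and \<open>\<Phi>(l t) \<le> D l^q \<Phi>(t)\<close> for \<open>l \<ge> 1\<close>, with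
  \<open>p > 1\<close>; fix \<open>1 < p0 < p\<close> and \<open>p1 > q\<close>. Splitting \<open>f\<close> at height \<open>t\<close> into a part in
  \<open>L^p0\<close> and a part in \<open>L^p1\<close>, Chebyshev's inequality bounds the measure of \<open>{|T f| > 2t}\<close> by
  truncated moments of \<open>f\<close>. Summing over dyadic heights \<open>t = 2^k\<close> and exchanging the sums,
  the growth bounds turn the series in \<open>k\<close> into geometric ones, which gives
  \<open>\<integral>\<Phi>(|T f|/4) \<le> K \<integral>\<Phi>(|f|)\<close>; in the weak case the truncated moments are themselves bounded
  by geometric series over the level sets of \<open>f\<close>. Rescaling \<open>\<Phi>\<close> by the Luxemburg parameter and
  using \<open>\<Phi>(y/K) \<le> \<Phi>(y)/K\<close> turns these modular inequalities into norm bounds.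
\<close>

section \<open>Growth of strict Young functions\<close>

locale young_growth =
  fixes \<Psi> :: "real \<Rightarrow> real" and p q D :: real
  assumes p_gt_1: "p > 1" and q_nonneg: "q \<ge> 0" and D_pos: "D > 0"
    and zero: "\<Psi> 0 = 0"
    and nonneg: "\<And>y. y \<ge> 0 \<Longrightarrow> \<Psi> y \<ge> 0"
    and pos: "\<And>y. y > 0 \<Longrightarrow> \<Psi> y > 0"
    and mono: "\<And>x y. 0 \<le> x \<Longrightarrow> x \<le> y \<Longrightarrow> \<Psi> x \<le> \<Psi> y"
    and shrink: "\<And>y c. y \<ge> 0 \<Longrightarrow> 0 < c \<Longrightarrow> c \<le> 1 \<Longrightarrow> \<Psi> (c * y) \<le> c powr p * \<Psi> y"
    and stretch: "\<And>y l. y \<ge> 0 \<Longrightarrow> l \<ge> 1 \<Longrightarrow> \<Psi> (l * y) \<le> D * l powr q * \<Psi> y"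

lemma young_growth_rescale:
  assumes "young_growth \<Psi> p q D" "s > 0"
  shows "young_growth (\<lambda>y. \<Psi> (y / s)) p q D"
proof -
  interpret young_growth \<Psi> p q D by fact
  show ?thesis
  proof
    show "\<Psi> (c * y / s) \<le> c powr p * \<Psi> (y / s)" if "y \<ge> 0" "0 < c" "c \<le> 1" for y c
      using shrink[of "y / s" c] that assms(2) by simp
    show "\<Psi> (l * y / s) \<le> D * l powr q * \<Psi> (y / s)" if "y \<ge> 0" "l \<ge> 1" for y l
      using stretch[of "y / s" l] that assms(2) by simp
  qed (use p_gt_1 q_nonneg D_pos zero nonneg pos mono assms(2) in \<open>simp_all add: divide_right_mono\<close>)
qed

lemma (in young_growth) divide_le:
  assumes "y \<ge> 0" "K \<ge> 1"
  shows "\<Psi> (y / K) \<le> \<Psi> y / K"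
proof -
  have "\<Psi> (y / K) \<le> (1/K) powr p * \<Psi> y"
    using shrink[of y "1/K"] assms by simp
  also have "\<dots> \<le> (1/K) * \<Psi> y"
    using assms p_gt_1 nonneg[of y] by (intro mult_right_mono powr_le_one_le) auto
  finally show ?thesis by simp
qed

lemma Lambda_cond_mono:
  assumes "Lambda_cond \<Phi>" "\<Phi> 0 = 0" "\<And>t. t \<ge> 0 \<Longrightarrow> \<Phi> t \<ge> 0" "0 \<le> x" "x \<le> y"
  shows "\<Phi> x \<le> \<Phi> y"
proof (cases "x = 0")
  case False
  obtain p where p: "p > 1"
    and shrink: "\<And>t c. t \<ge> 0 \<Longrightarrow> 0 < c \<Longrightarrow> c \<le> 1 \<Longrightarrow> \<Phi> (c * t) \<le> c powr p * \<Phi> t"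
    using assms(1) unfolding Lambda_cond_def by blast
  have "\<Phi> ((x/y) * y) \<le> (x/y) powr p * \<Phi> y"
    using False assms by (intro shrink) auto
  also have "\<dots> \<le> 1 * \<Phi> y"
    using False assms p by (intro mult_right_mono powr_le1) auto
  finally show ?thesis using False assms by simp
qed (use assms in auto)

text \<open>Iterating \<open>\<Phi>(2t) \<le> C \<Phi>(t)\<close> \<open>\<lceil>log\<^sub>2 l\<rceil>\<close> times.\<close>
lemma Delta2_power_growth:
  assumes C: "C \<ge> 1" and doubling: "\<And>t. t \<ge> 0 \<Longrightarrow> \<Phi> (2 * t) \<le> C * \<Phi> t"
    and mono: "\<And>x y. 0 \<le> x \<Longrightarrow> x \<le> y \<Longrightarrow> \<Phi> x \<le> \<Phi> y"
    and nonneg: "\<And>t. t \<ge> 0 \<Longrightarrow> \<Phi> t \<ge> 0"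
    and "y \<ge> 0" "l \<ge> 1"
  shows "\<Phi> (l * y) \<le> C * l powr log 2 C * \<Phi> y"
proof -
  have iter: "\<Phi> (2^n * y) \<le> C^n * \<Phi> y" for n
  proof (induction n)
    case (Suc n)
    have "\<Phi> (2^Suc n * y) \<le> C * \<Phi> (2^n * y)"
      using doubling[of "2^n * y"] \<open>y \<ge> 0\<close> by (simp add: mult.assoc)
    also have "\<dots> \<le> C * (C^n * \<Phi> y)" using Suc C by (intro mult_left_mono) auto
    finally show ?case by (simp add: mult.assoc)
  qed simp
  define n where "n = nat \<lceil>log 2 l\<rceil>"
  have "log 2 l \<ge> 0" using \<open>l \<ge> 1\<close> by simp
  then have n: "log 2 l \<le> real n" "real n \<le> log 2 l + 1"
    unfolding n_def by linarith+
  have "l = 2 powr (log 2 l)" using \<open>l \<ge> 1\<close> by simp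
  also have "\<dots> \<le> 2 powr real n" using n by (intro powr_mono) auto
  finally have "l \<le> 2 ^ n" by (simp add: powr_realpow)
  then have "\<Phi> (l * y) \<le> \<Phi> (2^n * y)"
    using \<open>y \<ge> 0\<close> \<open>l \<ge> 1\<close> by (intro mono mult_right_mono) auto
  also have "\<dots> \<le> C powr real n * \<Phi> y"
    using iter C by (simp add: powr_realpow)
  also have "\<dots> \<le> C powr (log 2 l + 1) * \<Phi> y"
    using C n nonneg[OF \<open>y \<ge> 0\<close>] by (intro mult_right_mono powr_mono) auto
  also have "C powr (log 2 l + 1) = C * C powr (log 2 l)"
    using C by (simp add: powr_add)
  also have "C powr (log 2 l) = l powr log 2 C"
    using C \<open>l \<ge> 1\<close> by (simp add: powr_def log_def)
  finally show ?thesis .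
qed

lemma strict_young_growth:
  assumes "strict_young \<Phi>"
  obtains p q D where "young_growth \<Phi> p q D"
proof -
  obtain p where p: "p > 1"
    and shrink: "\<And>t c. t \<ge> 0 \<Longrightarrow> 0 < c \<Longrightarrow> c \<le> 1 \<Longrightarrow> \<Phi> (c * t) \<le> c powr p * \<Phi> t"
    using assms unfolding strict_young_def Lambda_cond_def by blast
  obtain C where C: "C \<ge> 1" and doubling: "\<And>t. t \<ge> 0 \<Longrightarrow> \<Phi> (2 * t) \<le> C * \<Phi> t"
    using assms unfolding strict_young_def Delta2_cond_def by blast
  have zero: "\<Phi> 0 = 0" and nonneg: "\<And>t. t \<ge> 0 \<Longrightarrow> \<Phi> t \<ge> 0"
    and unbounded: "filterlim \<Phi> at_top at_top"
    using assms unfolding strict_young_def young_function_def by auto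
  have mono: "\<And>x y. 0 \<le> x \<Longrightarrow> x \<le> y \<Longrightarrow> \<Phi> x \<le> \<Phi> y"
  proof -
    have "Lambda_cond \<Phi>" using assms by (simp add: strict_young_def)
    then show "\<And>x y. 0 \<le> x \<Longrightarrow> x \<le> y \<Longrightarrow> \<Phi> x \<le> \<Phi> y"
      using Lambda_cond_mono zero nonneg by blast
  qed
  have stretch: "\<Phi> (l * y) \<le> C * l powr log 2 C * \<Phi> y" if "y \<ge> 0" "l \<ge> 1" for y l
    by (rule Delta2_power_growth[where \<Phi> = \<Phi>]) (use C doubling mono nonneg that in auto)
  have pos: "\<Phi> y > 0" if "y > 0" for y
  proof (rule ccontr)
    assume "\<not> \<Phi> y > 0"
    then have "\<Phi> y = 0" using nonneg[of y] that by auto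
    obtain t0 where t0: "\<And>t. t \<ge> t0 \<Longrightarrow> \<Phi> t \<ge> 1"
      using unbounded unfolding filterlim_at_top eventually_at_top_linorder by blast
    have "\<Phi> ((max t0 y / y) * y) \<le> C * (max t0 y / y) powr log 2 C * \<Phi> y"
      using that by (intro stretch) auto
    then have "\<Phi> (max t0 y) \<le> 0" using \<open>\<Phi> y = 0\<close> that by simp
    then show False using t0[of "max t0 y"] by simp
  qed
  have "young_growth \<Phi> p (log 2 C) C"
  proof
    show "\<Phi> (l * y) \<le> C * l powr log 2 C * \<Phi> y" if "y \<ge> 0" "l \<ge> 1" for y l
      using that by (rule stretch)
  qed (use p C zero nonneg pos mono shrink in simp_all)
  then show ?thesis by (rule that)
qed

lemma (in young_growth) small_scale_ratio:
  assumes "0 < w" "w \<le> z" "r \<le> p"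
  shows "\<Psi> w * z powr r \<le> w powr r * (w / z) powr (p - r) * \<Psi> z"
proof -
  have "\<Psi> w = \<Psi> ((w/z) * z)" using assms by simp
  also have "\<dots> \<le> (w/z) powr p * \<Psi> z" using assms by (intro shrink) auto
  finally have "\<Psi> w * z powr r \<le> (w/z) powr p * \<Psi> z * z powr r"
    by (rule mult_right_mono) simp
  also have "\<dots> = w powr r * (w / z) powr (p - r) * \<Psi> z"
    using assms by (simp add: powr_diff powr_divide field_simps)
  finally show ?thesis .
qed

lemma (in young_growth) large_scale_ratio:
  assumes "0 < z" "z \<le> w" "q \<le> r"
  shows "\<Psi> w * z powr r \<le> D * w powr r * (z / w) powr (r - q) * \<Psi> z"
proof -
  have "\<Psi> w = \<Psi> ((w/z) * z)" using assms by simp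
  also have "\<dots> \<le> D * (w/z) powr q * \<Psi> z" using assms by (intro stretch) auto
  finally have "\<Psi> w * z powr r \<le> D * (w/z) powr q * \<Psi> z * z powr r"
    by (rule mult_right_mono) simp
  also have "\<dots> = D * w powr r * (z / w) powr (r - q) * \<Psi> z"
    using assms by (simp add: powr_diff powr_divide field_simps)
  finally show ?thesis .
qed

lemma (in young_growth) borel_measurable_comp:
  assumes "z \<in> borel_measurable M" "\<And>x. z x \<ge> 0"
  shows "(\<lambda>x. ennreal (\<Psi> (z x))) \<in> borel_measurable M"
proof -
  have "mono (\<lambda>y. \<Psi> (max 0 y))" by (auto simp: mono_def intro!: mono)
  then have [measurable]: "(\<lambda>y. \<Psi> (max 0 y)) \<in> borel_measurable borel"
    by (rule borel_measurable_mono)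
  note [measurable] = assms(1)
  have "(\<lambda>x. ennreal (\<Psi> (max 0 (z x)))) \<in> borel_measurable M" by measurable
  then show ?thesis using assms(2) by (simp add: max_absorb2)
qed

section \<open>Truncated moments\<close>

lemma sets_lebesgue_superlevel:
  fixes z :: "'a::euclidean_space \<Rightarrow> real"
  assumes [measurable]: "z \<in> borel_measurable lebesgue"
  shows "{x. c < z x} \<in> sets lebesgue"
proof -
  have "{x \<in> space lebesgue. c < z x} \<in> sets lebesgue" by measurable
  then show ?thesis by simp
qed

definition moment_above :: "real \<Rightarrow> real \<Rightarrow> ('a::euclidean_space \<Rightarrow> real) \<Rightarrow> ennreal" where
  "moment_above r t z = (\<integral>\<^sup>+x. ennreal (if t < z x then z x powr r else 0) \<partial>lebesgue)"

definition moment_below :: "real \<Rightarrow> real \<Rightarrow> ('a::euclidean_space \<Rightarrow> real) \<Rightarrow> ennreal" where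
  "moment_below r t z = (\<integral>\<^sup>+x. ennreal (if t < z x then 0 else z x powr r) \<partial>lebesgue)"

lemma borel_measurable_truncations:
  fixes z :: "'a \<Rightarrow> real"
  assumes [measurable]: "z \<in> borel_measurable M"
  shows "(\<lambda>x. ennreal (if t < z x then z x powr r else 0)) \<in> borel_measurable M"
    and "(\<lambda>x. ennreal (if t < z x then 0 else z x powr r)) \<in> borel_measurable M"
  by measurable measurable

lemma moments_eq_nn_integral:
  assumes "z \<in> borel_measurable lebesgue"
  shows "a * moment_above r0 t z + b * moment_below r1 t z
    = (\<integral>\<^sup>+x. a * ennreal (if t < z x then z x powr r0 else 0)
        + b * ennreal (if t < z x then 0 else z x powr r1) \<partial>lebesgue)"
proof -
  note truncations = borel_measurable_truncations[OF assms]
  have "(\<integral>\<^sup>+x. a * ennreal (if t < z x then z x powr r0 else 0)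
        + b * ennreal (if t < z x then 0 else z x powr r1) \<partial>lebesgue)
      = (\<integral>\<^sup>+x. a * ennreal (if t < z x then z x powr r0 else 0) \<partial>lebesgue)
        + (\<integral>\<^sup>+x. b * ennreal (if t < z x then 0 else z x powr r1) \<partial>lebesgue)"
    by (intro nn_integral_add borel_measurable_times_ennreal borel_measurable_const truncations)
  then show ?thesis
    unfolding moment_above_def moment_below_def by (simp add: nn_integral_cmult truncations)
qed

lemma (in young_growth) moment_above_le_modular:
  assumes "t > 0" "r \<le> p" "z \<in> borel_measurable lebesgue" "\<And>x. z x \<ge> 0"
  shows "moment_above r t z \<le> ennreal (t powr r / \<Psi> t) * (\<integral>\<^sup>+x. ennreal (\<Psi> (z x)) \<partial>lebesgue)"
proof -
  have "(if t < z x then z x powr r else 0) \<le> t powr r / \<Psi> t * \<Psi> (z x)" for x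
  proof (cases "t < z x")
    case True
    have "\<Psi> t * z x powr r \<le> t powr r * (t / z x) powr (p - r) * \<Psi> (z x)"
      using True assms by (intro small_scale_ratio) auto
    also have "\<dots> \<le> t powr r * 1 * \<Psi> (z x)"
      using True assms nonneg[of "z x"] by (intro mult_right_mono mult_left_mono powr_le1) auto
    finally show ?thesis using True pos[OF \<open>t > 0\<close>] by (simp add: pos_le_divide_eq mult.commute)
  qed (use assms pos[of t] nonneg[of "z x"] in auto)
  then have "moment_above r t z \<le> (\<integral>\<^sup>+x. ennreal (t powr r / \<Psi> t) * ennreal (\<Psi> (z x)) \<partial>lebesgue)"
    unfolding moment_above_def using assms nonneg pos[of t]
    by (intro nn_integral_mono) (simp add: ennreal_mult[symmetric] ennreal_leI del: ennreal_mult)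
  also have "\<dots> = ennreal (t powr r / \<Psi> t) * (\<integral>\<^sup>+x. ennreal (\<Psi> (z x)) \<partial>lebesgue)"
    using borel_measurable_comp[OF assms(3,4)] by (rule nn_integral_cmult)
  finally show ?thesis .
qed

lemma (in young_growth) moment_below_le_modular:
  assumes "t > 0" "q \<le> r" "z \<in> borel_measurable lebesgue" "\<And>x. z x \<ge> 0"
  shows "moment_below r t z \<le> ennreal (D * t powr r / \<Psi> t) * (\<integral>\<^sup>+x. ennreal (\<Psi> (z x)) \<partial>lebesgue)"
proof -
  have "(if t < z x then 0 else z x powr r) \<le> D * t powr r / \<Psi> t * \<Psi> (z x)" for x
  proof (cases "t < z x \<or> z x = 0")
    case False
    then have zx: "0 < z x" "z x \<le> t" using assms(4)[of x] by auto
    have "\<Psi> t * z x powr r \<le> D * t powr r * (z x / t) powr (r - q) * \<Psi> (z x)"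
      using zx assms by (intro large_scale_ratio) auto
    also have "\<dots> \<le> D * t powr r * 1 * \<Psi> (z x)"
      using zx assms nonneg[of "z x"] D_pos by (intro mult_right_mono mult_left_mono powr_le1) auto
    finally show ?thesis using False pos[OF \<open>t > 0\<close>] by (simp add: pos_le_divide_eq mult_ac)
  qed (use assms pos[of t] nonneg[of "z x"] D_pos in auto)
  then have "moment_below r t z \<le> (\<integral>\<^sup>+x. ennreal (D * t powr r / \<Psi> t) * ennreal (\<Psi> (z x)) \<partial>lebesgue)"
    unfolding moment_below_def using assms nonneg pos[of t] D_pos
    by (intro nn_integral_mono) (simp add: ennreal_mult[symmetric] ennreal_leI del: ennreal_mult)
  also have "\<dots> = ennreal (D * t powr r / \<Psi> t) * (\<integral>\<^sup>+x. ennreal (\<Psi> (z x)) \<partial>lebesgue)"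
    using borel_measurable_comp[OF assms(3,4)] by (rule nn_integral_cmult)
  finally show ?thesis .
qed

lemma dyadic_level_above:
  fixes t y :: real
  assumes "0 < t" "t < y"
  obtains j :: nat where "2^j * t < y" "y \<le> 2^(j+1) * t"
proof -
  define L where "L = log 2 (y / t)"
  have L: "L > 0" "2 powr L = y / t" using assms unfolding L_def by (simp_all add: field_simps)
  define j where "j = nat (\<lceil>L\<rceil> - 1)"
  have j: "real j < L" "L \<le> real j + 1" using L unfolding j_def by linarith+
  have "2 powr real j < y / t" using j L by (metis powr_less_mono one_less_numeral_iff semiring_norm(76))
  moreover have "y / t \<le> 2 powr (real j + 1)" using j L by (metis powr_mono one_le_numeral)
  ultimately show ?thesis using assms
    by (intro that) (simp_all add: powr_realpow[symmetric] powr_add field_simps)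
qed

lemma dyadic_level_below:
  fixes t y :: real
  assumes "0 < y" "y \<le> t"
  obtains j :: nat where "t / 2^(j+1) < y" "y \<le> t / 2^j"
proof -
  define L where "L = log 2 (t / y)"
  have L: "L \<ge> 0" "2 powr L = t / y" using assms unfolding L_def by (simp_all add: field_simps)
  define j where "j = nat \<lfloor>L\<rfloor>"
  have j: "real j \<le> L" "L < real j + 1" using L unfolding j_def by linarith+
  have "2 powr real j \<le> t / y" using j L by (metis powr_mono one_le_numeral)
  moreover have "t / y < 2 powr (real j + 1)" using j L by (metis powr_less_mono one_less_numeral_iff semiring_norm(76))
  ultimately show ?thesis using assms
    by (intro that) (simp_all add: powr_realpow[symmetric] powr_add field_simps)
qed

lemma ennreal_le_divide_of_mult_le_one:
  assumes "ennreal a * m \<le> 1" "a > 0"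
  shows "m \<le> ennreal (1 / a)"
proof -
  have "m = ennreal (1/a) * (ennreal a * m)"
    using assms(2) by (simp add: ennreal_mult[symmetric] mult.assoc[symmetric] del: ennreal_mult)
  also have "\<dots> \<le> ennreal (1/a)" using assms(1) mult_left_mono[of _ 1] by fastforce
  finally show ?thesis .
qed

lemma ennreal_term_le_suminf: "f i \<le> (\<Sum>i. f i :: ennreal)"
  using sum_le_suminf[OF summableI, of "{i}" f] by simp

lemma nn_integral_le_geometric_levels:
  fixes z :: "'a::euclidean_space \<Rightarrow> real"
  assumes [measurable]: "z \<in> borel_measurable lebesgue"
    and levels: "\<And>x. g x \<le> (\<Sum>j. ennreal (c j) * indicator {x. a j < z x} x)"
    and terms: "\<And>j. ennreal (c j) * emeasure lebesgue {x. a j < z x} \<le> ennreal (K * r ^ j)"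
    and "K \<ge> 0" "0 \<le> r" "r < 1"
  shows "(\<integral>\<^sup>+x. g x \<partial>lebesgue) \<le> ennreal (K / (1 - r))"
proof -
  have sets: "{x. a j < z x} \<in> sets lebesgue" for j
    by (rule sets_lebesgue_superlevel) measurable
  have "(\<integral>\<^sup>+x. g x \<partial>lebesgue) \<le> (\<integral>\<^sup>+x. (\<Sum>j. ennreal (c j) * indicator {x. a j < z x} x) \<partial>lebesgue)"
    by (intro nn_integral_mono levels)
  also have "\<dots> = (\<Sum>j. ennreal (c j) * emeasure lebesgue {x. a j < z x})"
    using sets by (simp add: nn_integral_suminf nn_integral_cmult_indicator)
  also have "\<dots> \<le> (\<Sum>j. ennreal (K * r ^ j))"
    by (intro suminf_le summableI terms)
  also have "\<dots> = ennreal (K / (1 - r))"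
  proof (rule suminf_ennreal_eq)
    show "(\<lambda>j. K * r ^ j) sums (K / (1 - r))"
      using sums_mult[OF geometric_sums, of r K] assms by simp
  qed (use assms in auto)
  finally show ?thesis .
qed

lemma (in young_growth) dyadic_lower_growth:
  assumes "t \<ge> 0"
  shows "2 powr (real j * p) * \<Psi> t \<le> \<Psi> (2^j * t)"
proof -
  have "\<Psi> t = \<Psi> ((1/2^j) * (2^j * t))" by simp
  also have "\<dots> \<le> (1/2^j) powr p * \<Psi> (2^j * t)" using assms by (intro shrink) auto
  also have "(1/2^j) powr p = 1 / 2 powr (real j * p)"
    by (simp add: powr_divide powr_realpow[symmetric] powr_powr)
  finally show ?thesis by (simp add: field_simps)
qed

lemma (in young_growth) dyadic_upper_growth:
  assumes "t \<ge> 0"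
  shows "\<Psi> (2^j * t) \<le> D * 2 powr (real j * q) * \<Psi> t"
proof -
  have "\<Psi> (2^j * t) \<le> D * (2^j) powr q * \<Psi> t" using assms by (intro stretch) auto
  also have "(2^j) powr q = 2 powr (real j * q)"
    by (simp add: powr_realpow[symmetric] powr_powr)
  finally show ?thesis .
qed

lemma (in young_growth) moment_above_le_weak:
  assumes zm: "z \<in> borel_measurable lebesgue"
    and weak: "\<And>s. s > 0 \<Longrightarrow> ennreal (\<Psi> s) * emeasure lebesgue {x. s < z x} \<le> 1"
    and r: "0 < r" "r < p" and t: "t > 0"
  shows "moment_above r t z \<le> ennreal (2 powr r * t powr r / \<Psi> t / (1 - 2 powr (r - p)))"
  unfolding moment_above_def
proof (rule nn_integral_le_geometric_levels[OF zm])
  show "ennreal (if t < z x then z x powr r else 0)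
    \<le> (\<Sum>j. ennreal ((2^(j+1) * t) powr r) * indicator {x. 2^j * t < z x} x)" for x
  proof (cases "t < z x")
    case True
    then obtain j :: nat where j: "2^j * t < z x" "z x \<le> 2^(j+1) * t"
      using dyadic_level_above t by blast
    then have "ennreal (if t < z x then z x powr r else 0)
        \<le> ennreal ((2^(j+1) * t) powr r) * indicator {x. 2^j * t < z x} x"
      using True r t by (auto intro!: powr_mono2 ennreal_leI)
    also have "\<dots> \<le> (\<Sum>j. ennreal ((2^(j+1) * t) powr r) * indicator {x. 2^j * t < z x} x)"
      by (rule ennreal_term_le_suminf)
    finally show ?thesis .
  qed simp
  show "ennreal ((2^(j+1) * t) powr r) * emeasure lebesgue {x. 2^j * t < z x}
    \<le> ennreal (2 powr r * t powr r / \<Psi> t * (2 powr (r - p)) ^ j)" for j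
  proof -
    have tj: "2^j * t > 0" and Pt: "\<Psi> t > 0" using t pos by auto
    have "(2^(j+1) * t) powr r / \<Psi> (2^j * t) \<le> (2^(j+1) * t) powr r / (2 powr (real j * p) * \<Psi> t)"
      using dyadic_lower_growth[of t j] Pt pos[OF tj] t by (intro divide_left_mono) auto
    also have "\<dots> = 2 powr r * t powr r / \<Psi> t * (2 powr (r - p)) ^ j"
      using t Pt
      by (simp add: powr_mult powr_realpow[symmetric] powr_powr powr_add powr_diff field_simps)
    finally have "ennreal ((2^(j+1) * t) powr r) * ennreal (1 / \<Psi> (2^j * t))
        \<le> ennreal (2 powr r * t powr r / \<Psi> t * (2 powr (r - p)) ^ j)"
      using pos[OF tj] by (simp add: ennreal_mult[symmetric] ennreal_leI del: ennreal_mult)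
    then show ?thesis
      using ennreal_le_divide_of_mult_le_one[OF weak[OF tj] pos[OF tj]]
      by (meson mult_left_mono order_trans zero_le)
  qed
qed (use r t pos[OF t] powr_less_mono[of "r - p" 0 2] in auto)

lemma (in young_growth) moment_below_le_weak:
  assumes zm: "z \<in> borel_measurable lebesgue" and zn: "\<And>x. z x \<ge> 0"
    and weak: "\<And>s. s > 0 \<Longrightarrow> ennreal (\<Psi> s) * emeasure lebesgue {x. s < z x} \<le> 1"
    and r: "q < r" and t: "t > 0"
  shows "moment_below r t z \<le> ennreal (D * 2 powr q * t powr r / \<Psi> t / (1 - 2 powr (q - r)))"
  unfolding moment_below_def
proof (rule nn_integral_le_geometric_levels[OF zm])
  show "ennreal (if t < z x then 0 else z x powr r)
    \<le> (\<Sum>j. ennreal ((t / 2^j) powr r) * indicator {x. t / 2^(j+1) < z x} x)" for x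
  proof (cases "t < z x \<or> z x = 0")
    case False
    then obtain j :: nat where j: "t / 2^(j+1) < z x" "z x \<le> t / 2^j"
      using dyadic_level_below zn[of x] by (metis less_eq_real_def not_le)
    then have "ennreal (if t < z x then 0 else z x powr r)
        \<le> ennreal ((t / 2^j) powr r) * indicator {x. t / 2^(j+1) < z x} x"
      using False r q_nonneg zn[of x] by (auto intro!: powr_mono2 ennreal_leI)
    also have "\<dots> \<le> (\<Sum>j. ennreal ((t / 2^j) powr r) * indicator {x. t / 2^(j+1) < z x} x)"
      by (rule ennreal_term_le_suminf)
    finally show ?thesis .
  qed auto
  show "ennreal ((t / 2^j) powr r) * emeasure lebesgue {x. t / 2^(j+1) < z x}
    \<le> ennreal (D * 2 powr q * t powr r / \<Psi> t * (2 powr (q - r)) ^ j)" for j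
  proof -
    have tj: "t / 2^(j+1) > 0" and Pt: "\<Psi> t > 0" using t pos by auto
    have "\<Psi> t \<le> D * 2 powr (real (j+1) * q) * \<Psi> (t / 2^(j+1))"
      using dyadic_upper_growth[of "t / 2^(j+1)" "j+1"] t by simp
    then have "(t / 2^j) powr r * \<Psi> t \<le> (t / 2^j) powr r * (D * 2 powr (real (j+1) * q) * \<Psi> (t / 2^(j+1)))"
      by (rule mult_left_mono) simp
    then have "(t / 2^j) powr r / \<Psi> (t / 2^(j+1))
        \<le> (t / 2^j) powr r * (D * 2 powr (real (j+1) * q)) / \<Psi> t"
      using Pt pos[OF tj] by (simp add: field_simps)
    also have "\<dots> = D * 2 powr q * t powr r / \<Psi> t * (2 powr (q - r)) ^ j"
      using t Pt
      by (simp add: powr_divide powr_realpow[symmetric] powr_powr powr_add powr_diff field_simps)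
    finally have "ennreal ((t / 2^j) powr r) * ennreal (1 / \<Psi> (t / 2^(j+1)))
        \<le> ennreal (D * 2 powr q * t powr r / \<Psi> t * (2 powr (q - r)) ^ j)"
      using pos[OF tj] by (simp add: ennreal_mult[symmetric] ennreal_leI del: ennreal_mult)
    then show ?thesis
      using ennreal_le_divide_of_mult_le_one[OF weak[OF tj] pos[OF tj]]
      by (meson mult_left_mono order_trans zero_le)
  qed
qed (use r t pos[OF t] D_pos powr_less_mono[of "q - r" 0 2] in auto)

section \<open>Dyadic summation\<close>

lemma dyadic_bracket:
  fixes y :: real
  assumes "y > 0"
  obtains m :: int where "2 powr (of_int m - 1) < y" "y \<le> 2 powr of_int m"
proof
  have "2 powr (of_int \<lceil>log 2 y\<rceil> - 1) < 2 powr log 2 y" by (intro powr_less_mono) linarith+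
  then show "2 powr (of_int \<lceil>log 2 y\<rceil> - 1) < y" using assms by simp
  have "2 powr log 2 y \<le> 2 powr of_int \<lceil>log 2 y\<rceil>" by (intro powr_mono) linarith+
  then show "y \<le> 2 powr of_int \<lceil>log 2 y\<rceil>" using assms by simp
qed

definition geometric_tail :: "real \<Rightarrow> int \<Rightarrow> real" where
  "geometric_tail r i = (if 0 \<le> i then r ^ nat i else 0)"

lemma geometric_tail_nonneg: "0 \<le> r \<Longrightarrow> 0 \<le> geometric_tail r i"
  by (simp add: geometric_tail_def)

lemma nn_integral_geometric_tail:
  assumes "0 \<le> r" "r < 1"
  shows "(\<integral>\<^sup>+k. ennreal (geometric_tail r k) \<partial>count_space UNIV) = ennreal (1 / (1 - r))"
proof -
  have "(\<integral>\<^sup>+k. ennreal (geometric_tail r k) \<partial>count_space UNIV)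
      = (\<integral>\<^sup>+k. ennreal (r ^ nat k) * indicator {0..} k \<partial>count_space UNIV)"
    by (intro nn_integral_cong) (auto simp: geometric_tail_def indicator_def)
  also have "\<dots> = (\<integral>\<^sup>+k. ennreal (r ^ nat k) \<partial>count_space {0..})"
    by (simp add: nn_integral_count_space_indicator)
  also have "\<dots> = (\<integral>\<^sup>+n. ennreal (r ^ nat (int n)) \<partial>count_space UNIV)"
  proof -
    have "bij_betw int UNIV {0::int..}" by (rule bij_betwI[where g=nat]) auto
    then show ?thesis by (rule nn_integral_bij_count_space[symmetric])
  qed
  also have "\<dots> = (\<Sum>n. ennreal (r ^ n))"
    by (simp add: nn_integral_count_space_nat)
  also have "\<dots> = ennreal (1 / (1 - r))"
    by (rule suminf_ennreal_eq) (use assms in \<open>auto intro: geometric_sums\<close>)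
  finally show ?thesis .
qed

lemma nn_integral_geometric_tail_shift:
  assumes "0 \<le> r" "r < 1"
  shows "(\<integral>\<^sup>+k. ennreal (geometric_tail r (c - k)) \<partial>count_space UNIV) = ennreal (1 / (1 - r))"
    and "(\<integral>\<^sup>+k. ennreal (geometric_tail r (k - c)) \<partial>count_space UNIV) = ennreal (1 / (1 - r))"
proof -
  have "bij_betw (\<lambda>k. c - k) (UNIV :: int set) UNIV" "bij_betw (\<lambda>k. k - c) (UNIV :: int set) UNIV"
    by (auto intro: bij_betwI[where g="\<lambda>k. c - k"] bij_betwI[where g="\<lambda>k. k + c"])
  then show "(\<integral>\<^sup>+k. ennreal (geometric_tail r (c - k)) \<partial>count_space UNIV) = ennreal (1 / (1 - r))"
    and "(\<integral>\<^sup>+k. ennreal (geometric_tail r (k - c)) \<partial>count_space UNIV) = ennreal (1 / (1 - r))"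
    using nn_integral_geometric_tail[OF assms]
    by (simp_all add: nn_integral_bij_count_space[of _ UNIV UNIV "\<lambda>i. ennreal (geometric_tail r i)"])
qed

lemma (in young_growth) modular_le_dyadic_sum:
  assumes "v \<ge> 0"
  shows "ennreal (\<Psi> (v / 4))
    \<le> (\<integral>\<^sup>+k. ennreal (\<Psi> (2 powr of_int k)) * indicator {y. 2 * 2 powr of_int k < y} v \<partial>count_space UNIV)"
proof (cases "v = 0")
  case False
  then obtain m :: int where m: "2 powr (of_int m - 1) < v" "v \<le> 2 powr of_int m"
    using assms dyadic_bracket by (metis less_eq_real_def)
  have "2 * 2 powr of_int (m - 2) = (2::real) powr (of_int m - 1)"
    using powr_add[of "2::real" 1 "of_int m - 2"] by simp
  moreover have "v / 4 \<le> 2 powr of_int (m - 2)"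
    using m by (simp add: powr_diff)
  ultimately have "ennreal (\<Psi> (v / 4))
      \<le> ennreal (\<Psi> (2 powr of_int (m - 2))) * indicator {y. 2 * 2 powr of_int (m - 2) < y} v"
    using m assms by (auto intro!: ennreal_leI mono)
  also have "\<dots> \<le> (\<integral>\<^sup>+k. ennreal (\<Psi> (2 powr of_int k)) * indicator {y. 2 * 2 powr of_int k < y} v \<partial>count_space UNIV)"
    by (rule nn_integral_ge_point[where p = "\<lambda>k. ennreal (\<Psi> (2 powr of_int k)) * indicator {y. 2 * 2 powr of_int k < y} v"]) simp
  finally show ?thesis .
qed (simp add: zero)

lemma (in young_growth) dyadic_above_term_le:
  fixes k m :: int
  assumes "2 powr (of_int m - 1) < y" "y \<le> 2 powr of_int m" "2 powr of_int k < y"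
    and "A \<ge> 0" "r \<le> p"
  shows "\<Psi> (2 powr of_int k) * (A / (2 powr of_int k) powr r) * y powr r
          \<le> \<Psi> y * A * geometric_tail (2 powr (r - p)) (m - 1 - k)"
proof -
  define w where "w = 2 powr (of_int k :: real)"
  have w: "w > 0" and y: "y > 0" using assms(3) unfolding w_def by (auto intro: less_trans[rotated])
  have "2 powr of_int k < 2 powr (of_int m :: real)" using assms by linarith
  then have "k < m" by simp
  then have tail: "geometric_tail (2 powr (r - p)) (m - 1 - k) = 2 powr ((p - r) * (of_int k - of_int m + 1))"
    using powr_power[of "2::real" "r - p" "nat (m - 1 - k)"]
    by (simp add: geometric_tail_def algebra_simps)
  have "w / y \<le> w / 2 powr (of_int m - 1)"
    using assms w y by (intro divide_left_mono) auto
  also have "\<dots> = 2 powr (of_int k - of_int m + 1)"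
    unfolding w_def by (simp add: powr_diff[symmetric] algebra_simps)
  finally have "(w / y) powr (p - r) \<le> (2 powr (of_int k - of_int m + 1)) powr (p - r)"
    using assms w y by (intro powr_mono2) auto
  also have "\<dots> = geometric_tail (2 powr (r - p)) (m - 1 - k)"
    unfolding tail by (simp add: powr_powr mult.commute)
  finally have ratio: "(w / y) powr (p - r) \<le> geometric_tail (2 powr (r - p)) (m - 1 - k)" .
  have "\<Psi> w * (A / w powr r) * y powr r = A * (\<Psi> w * y powr r) / w powr r"
    by simp
  also have "\<dots> \<le> A * (w powr r * (w / y) powr (p - r) * \<Psi> y) / w powr r"
    using small_scale_ratio[of w y r] assms w unfolding w_def
    by (intro divide_right_mono mult_left_mono) auto
  also have "\<dots> = A * (w / y) powr (p - r) * \<Psi> y" using w by simp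
  also have "\<dots> \<le> A * geometric_tail (2 powr (r - p)) (m - 1 - k) * \<Psi> y"
    using ratio assms y nonneg[of y] by (intro mult_right_mono mult_left_mono) auto
  finally show ?thesis unfolding w_def by (simp add: algebra_simps)
qed

lemma (in young_growth) dyadic_below_term_le:
  fixes k m :: int
  assumes "2 powr (of_int m - 1) < y" "y \<le> 2 powr of_int m" "y \<le> 2 powr of_int k"
    and "B \<ge> 0" "q \<le> r"
  shows "\<Psi> (2 powr of_int k) * (B / (2 powr of_int k) powr r) * y powr r
          \<le> \<Psi> y * B * D * geometric_tail (2 powr (q - r)) (k - m)"
proof -
  define w where "w = 2 powr (of_int k :: real)"
  have w: "w > 0" and y: "y > 0" using assms(1) unfolding w_def by (auto intro: less_trans[rotated])
  have "2 powr (of_int m - 1) < 2 powr (of_int k :: real)" using assms by linarith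
  then have "m - 1 < k" by simp
  then have tail: "geometric_tail (2 powr (q - r)) (k - m) = 2 powr ((r - q) * (of_int m - of_int k))"
    using powr_power[of "2::real" "q - r" "nat (k - m)"]
    by (simp add: geometric_tail_def algebra_simps)
  have "y / w \<le> 2 powr of_int m / w"
    using assms w by (intro divide_right_mono) auto
  also have "\<dots> = 2 powr (of_int m - of_int k)"
    unfolding w_def by (simp add: powr_diff[symmetric])
  finally have "(y / w) powr (r - q) \<le> (2 powr (of_int m - of_int k)) powr (r - q)"
    using assms w y by (intro powr_mono2) auto
  also have "\<dots> = geometric_tail (2 powr (q - r)) (k - m)"
    unfolding tail by (simp add: powr_powr mult.commute)
  finally have ratio: "(y / w) powr (r - q) \<le> geometric_tail (2 powr (q - r)) (k - m)" .
  have "\<Psi> w * (B / w powr r) * y powr r = B * (\<Psi> w * y powr r) / w powr r"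
    by simp
  also have "\<dots> \<le> B * (D * w powr r * (y / w) powr (r - q) * \<Psi> y) / w powr r"
    using large_scale_ratio[of y w r] assms w y unfolding w_def
    by (intro divide_right_mono mult_left_mono) auto
  also have "\<dots> = B * D * (y / w) powr (r - q) * \<Psi> y" using w by simp
  also have "\<dots> \<le> B * D * geometric_tail (2 powr (q - r)) (k - m) * \<Psi> y"
    using ratio assms y nonneg[of y] D_pos by (intro mult_right_mono mult_left_mono) auto
  finally show ?thesis unfolding w_def by (simp add: algebra_simps)
qed

lemma (in young_growth) dyadic_split_term_le:
  fixes k m :: int
  assumes m: "2 powr (of_int m - 1) < y" "y \<le> 2 powr of_int m"
    and "A \<ge> 0" "B \<ge> 0" "p0 \<le> p" "q \<le> p1"
  shows "ennreal (\<Psi> (2 powr of_int k) * (A / (2 powr of_int k) powr p0))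
              * ennreal (if 2 powr of_int k < y then y powr p0 else 0)
           + ennreal (\<Psi> (2 powr of_int k) * (B / (2 powr of_int k) powr p1))
              * ennreal (if 2 powr of_int k < y then 0 else y powr p1)
        \<le> ennreal (\<Psi> y * A) * ennreal (geometric_tail (2 powr (p0 - p)) (m - 1 - k))
          + ennreal (\<Psi> y * B * D) * ennreal (geometric_tail (2 powr (q - p1)) (k - m))"
proof -
  have y: "y > 0" using m(1) by (rule less_trans[rotated]) simp
  have nonneg_parts: "\<Psi> (2 powr of_int k) \<ge> 0" "\<Psi> y * A \<ge> 0" "\<Psi> y * B * D \<ge> 0"
    using assms y nonneg[of y] D_pos by (auto intro: nonneg)
  show ?thesis
  proof (cases "2 powr of_int k < y")
    case True
    then have "\<Psi> (2 powr of_int k) * (A / (2 powr of_int k) powr p0) * y powr p0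
        \<le> \<Psi> y * A * geometric_tail (2 powr (p0 - p)) (m - 1 - k)"
      using dyadic_above_term_le[OF m] assms by simp
    then show ?thesis
      using True nonneg_parts assms
      by (simp add: ennreal_mult[symmetric] geometric_tail_nonneg ennreal_leI add_increasing2
          del: ennreal_mult)
  next
    case False
    then have "\<Psi> (2 powr of_int k) * (B / (2 powr of_int k) powr p1) * y powr p1
        \<le> \<Psi> y * B * D * geometric_tail (2 powr (q - p1)) (k - m)"
      using dyadic_below_term_le[OF m] assms by simp
    then show ?thesis
      using False nonneg_parts assms
      by (simp add: ennreal_mult[symmetric] geometric_tail_nonneg ennreal_leI add_increasing
          del: ennreal_mult)
  qed
qed

lemma (in young_growth) dyadic_split_sum_le:
  assumes "y \<ge> 0" "A \<ge> 0" "B \<ge> 0" "p0 < p" "q < p1"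
  shows "(\<integral>\<^sup>+k. ennreal (\<Psi> (2 powr of_int k) * (A / (2 powr of_int k) powr p0))
              * ennreal (if 2 powr of_int k < y then y powr p0 else 0)
           + ennreal (\<Psi> (2 powr of_int k) * (B / (2 powr of_int k) powr p1))
              * ennreal (if 2 powr of_int k < y then 0 else y powr p1) \<partial>count_space UNIV)
        \<le> ennreal ((A / (1 - 2 powr (p0 - p)) + B * D / (1 - 2 powr (q - p1))) * \<Psi> y)"
proof (cases "y = 0")
  case True
  then have "\<not> 2 powr (of_int k :: real) < y" for k by (simp add: not_less)
  then show ?thesis using True assms by simp
next
  case False
  then obtain m :: int where m: "2 powr (of_int m - 1) < y" "y \<le> 2 powr of_int m"
    using assms dyadic_bracket by (metis less_eq_real_def)
  define r0 where "r0 = 2 powr (p0 - p)"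
  define r1 where "r1 = 2 powr (q - p1)"
  have r0: "0 \<le> r0" "r0 < 1" and r1: "0 \<le> r1" "r1 < 1"
    using assms powr_less_mono[of "p0 - p" 0 2] powr_less_mono[of "q - p1" 0 2]
    unfolding r0_def r1_def by auto
  have c: "\<Psi> y * A \<ge> 0" "\<Psi> y * B * D \<ge> 0" using assms nonneg[of y] D_pos by auto
  have "(\<integral>\<^sup>+k. ennreal (\<Psi> (2 powr of_int k) * (A / (2 powr of_int k) powr p0))
              * ennreal (if 2 powr of_int k < y then y powr p0 else 0)
           + ennreal (\<Psi> (2 powr of_int k) * (B / (2 powr of_int k) powr p1))
              * ennreal (if 2 powr of_int k < y then 0 else y powr p1) \<partial>count_space UNIV)
      \<le> (\<integral>\<^sup>+k. ennreal (\<Psi> y * A) * ennreal (geometric_tail r0 (m - 1 - k))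
              + ennreal (\<Psi> y * B * D) * ennreal (geometric_tail r1 (k - m)) \<partial>count_space UNIV)"
    unfolding r0_def r1_def using assms by (intro nn_integral_mono dyadic_split_term_le[OF m]) auto
  also have "\<dots> = ennreal (\<Psi> y * A) * ennreal (1 / (1 - r0)) + ennreal (\<Psi> y * B * D) * ennreal (1 / (1 - r1))"
    by (simp add: nn_integral_add nn_integral_cmult nn_integral_geometric_tail_shift r0 r1)
  also have "\<dots> = ennreal ((A / (1 - 2 powr (p0 - p)) + B * D / (1 - 2 powr (q - p1))) * \<Psi> y)"
    using c r0 r1 unfolding r0_def r1_def
    by (simp add: ennreal_mult[symmetric] ennreal_plus[symmetric] field_simps
        del: ennreal_mult ennreal_plus)
  finally show ?thesis .
qed

lemma (in young_growth) modular_le_level_sum: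
  fixes v :: "'a::euclidean_space \<Rightarrow> real"
  assumes [measurable]: "v \<in> borel_measurable lebesgue" and "\<And>x. v x \<ge> 0"
  shows "(\<integral>\<^sup>+x. ennreal (\<Psi> (v x / 4)) \<partial>lebesgue)
    \<le> (\<integral>\<^sup>+k. ennreal (\<Psi> (2 powr of_int k)) * emeasure lebesgue {x. 2 * 2 powr of_int k < v x}
          \<partial>count_space UNIV)"
proof -
  have sets [measurable]: "{x. 2 * 2 powr of_int k < v x} \<in> sets lebesgue" for k :: int
    by (rule sets_lebesgue_superlevel) measurable
  define F where "F k x = ennreal (\<Psi> (2 powr of_int k)) * indicator {x. 2 * 2 powr of_int k < v x} x"
    for k :: int and x
  have [measurable]: "F k \<in> borel_measurable lebesgue" for k
    unfolding F_def using sets[of k]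
    by (intro borel_measurable_times_ennreal borel_measurable_const borel_measurable_indicator)
  have "(\<integral>\<^sup>+x. ennreal (\<Psi> (v x / 4)) \<partial>lebesgue) \<le> (\<integral>\<^sup>+x. \<integral>\<^sup>+k. F k x \<partial>count_space UNIV \<partial>lebesgue)"
    unfolding F_def using modular_le_dyadic_sum assms(2)
    by (intro nn_integral_mono) (simp add: indicator_def)
  also have "\<dots> = (\<integral>\<^sup>+k. \<integral>\<^sup>+x. F k x \<partial>lebesgue \<partial>count_space UNIV)"
    by (rule nn_integral_count_space_nn_integral) auto
  also have "\<dots> = (\<integral>\<^sup>+k. ennreal (\<Psi> (2 powr of_int k)) * emeasure lebesgue {x. 2 * 2 powr of_int k < v x}
          \<partial>count_space UNIV)"
    unfolding F_def by (simp only: nn_integral_cmult_indicator[OF sets])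
  finally show ?thesis .
qed

lemma (in young_growth) modular_bound_of_distribution:
  fixes z v :: "'a::euclidean_space \<Rightarrow> real"
  assumes zm [measurable]: "z \<in> borel_measurable lebesgue" and vm: "v \<in> borel_measurable lebesgue"
    and zn: "\<And>x. z x \<ge> 0" and vn: "\<And>x. v x \<ge> 0"
    and AB: "A \<ge> 0" "B \<ge> 0" and exponents: "p0 < p" "q < p1"
    and distribution: "\<And>t. t > 0 \<Longrightarrow> emeasure lebesgue {x. 2 * t < v x}
       \<le> ennreal (A / t powr p0) * moment_above p0 t z + ennreal (B / t powr p1) * moment_below p1 t z"
  shows "(\<integral>\<^sup>+x. ennreal (\<Psi> (v x / 4)) \<partial>lebesgue)
     \<le> ennreal (A / (1 - 2 powr (p0 - p)) + B * D / (1 - 2 powr (q - p1)))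
          * (\<integral>\<^sup>+x. ennreal (\<Psi> (z x)) \<partial>lebesgue)"
proof -
  define w :: "int \<Rightarrow> real" where "w k = 2 powr of_int k" for k
  have w: "w k > 0" for k unfolding w_def by simp
  define K where "K = A / (1 - 2 powr (p0 - p)) + B * D / (1 - 2 powr (q - p1))"
  have "2 powr (p0 - p) < 1" "2 powr (q - p1) < (1::real)"
    using exponents powr_less_mono[of "p0 - p" 0 2] powr_less_mono[of "q - p1" 0 2] by auto
  then have K: "K \<ge> 0" unfolding K_def using AB D_pos by auto
  define G where "G k x = ennreal (\<Psi> (w k) * (A / (w k) powr p0)) * ennreal (if w k < z x then z x powr p0 else 0)
      + ennreal (\<Psi> (w k) * (B / (w k) powr p1)) * ennreal (if w k < z x then 0 else z x powr p1)" for k x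
  have [measurable]: "G k \<in> borel_measurable lebesgue" for k
    unfolding G_def
    by (intro borel_measurable_add borel_measurable_times_ennreal borel_measurable_const
        borel_measurable_truncations[OF zm])
  have "(\<integral>\<^sup>+x. ennreal (\<Psi> (v x / 4)) \<partial>lebesgue)
      \<le> (\<integral>\<^sup>+k. ennreal (\<Psi> (w k)) * emeasure lebesgue {x. 2 * w k < v x} \<partial>count_space UNIV)"
    unfolding w_def by (rule modular_le_level_sum[OF vm vn])
  also have "\<dots> \<le> (\<integral>\<^sup>+k. \<integral>\<^sup>+x. G k x \<partial>lebesgue \<partial>count_space UNIV)"
  proof (intro nn_integral_mono)
    fix k
    have Pk: "\<Psi> (w k) \<ge> 0" using w by (intro nonneg less_imp_le)
    have "ennreal (\<Psi> (w k)) * emeasure lebesgue {x. 2 * w k < v x}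
       \<le> ennreal (\<Psi> (w k)) * (ennreal (A / w k powr p0) * moment_above p0 (w k) z
           + ennreal (B / w k powr p1) * moment_below p1 (w k) z)"
      using distribution[OF w] by (intro mult_left_mono) auto
    also have "\<dots> = ennreal (\<Psi> (w k) * (A / w k powr p0)) * moment_above p0 (w k) z
        + ennreal (\<Psi> (w k) * (B / w k powr p1)) * moment_below p1 (w k) z"
    proof -
      have "ennreal (\<Psi> (w k) * (A / w k powr p0)) = ennreal (\<Psi> (w k)) * ennreal (A / w k powr p0)"
        "ennreal (\<Psi> (w k) * (B / w k powr p1)) = ennreal (\<Psi> (w k)) * ennreal (B / w k powr p1)"
        using Pk AB by (intro ennreal_mult; simp)+
      then show ?thesis by (simp only: distrib_left mult.assoc)
    qed
    also have "\<dots> = (\<integral>\<^sup>+x. G k x \<partial>lebesgue)"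
      unfolding G_def by (rule moments_eq_nn_integral[OF zm])
    finally show "ennreal (\<Psi> (w k)) * emeasure lebesgue {x. 2 * w k < v x} \<le> (\<integral>\<^sup>+x. G k x \<partial>lebesgue)" .
  qed
  also have "\<dots> = (\<integral>\<^sup>+x. \<integral>\<^sup>+k. G k x \<partial>count_space UNIV \<partial>lebesgue)"
    by (rule nn_integral_count_space_nn_integral[symmetric]) auto
  also have "\<dots> \<le> (\<integral>\<^sup>+x. ennreal (K * \<Psi> (z x)) \<partial>lebesgue)"
    unfolding G_def w_def K_def using dyadic_split_sum_le[OF zn AB exponents]
    by (intro nn_integral_mono) simp
  also have "\<dots> = ennreal K * (\<integral>\<^sup>+x. ennreal (\<Psi> (z x)) \<partial>lebesgue)"
    using K nonneg zn borel_measurable_comp[OF zm zn] by (simp add: ennreal_mult nn_integral_cmult)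
  finally show ?thesis unfolding K_def .
qed

section \<open>Splitting at a height\<close>

text \<open>The constant \<open>K\<close> bounds \<open>r\<close>-th powers of norms, i.e. it plays the role of \<open>\<parallel>T\<parallel>^r\<close>.\<close>
definition strong_type :: "real \<Rightarrow> real \<Rightarrow> (('a::euclidean_space \<Rightarrow> complex) \<Rightarrow> ('a \<Rightarrow> complex)) \<Rightarrow> bool" where
  "strong_type r K T \<longleftrightarrow> (\<forall>g. in_Lp r g \<longrightarrow> in_Lp r (T g) \<and>
     (\<integral>\<^sup>+x. ennreal (cmod (T g x) powr r) \<partial>lebesgue)
       \<le> ennreal K * (\<integral>\<^sup>+x. ennreal (cmod (g x) powr r) \<partial>lebesgue))"

definition additive_on_Lp_sum :: "(('a::euclidean_space \<Rightarrow> complex) \<Rightarrow> ('a \<Rightarrow> complex)) \<Rightarrow> bool" where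
  "additive_on_Lp_sum T \<longleftrightarrow> (\<forall>f g. f \<in> Lp_sum_space \<longrightarrow> g \<in> Lp_sum_space \<longrightarrow>
     (AE x in lebesgue. T (\<lambda>y. f y + g y) x = T f x + T g x))"

lemma multiplier_extension_additive:
  "is_multiplier_extension a T \<Longrightarrow> additive_on_Lp_sum T"
  unfolding is_multiplier_extension_def additive_on_Lp_sum_def by blast

lemma multiplier_extension_strong_type:
  assumes "is_multiplier_extension a T" "r > 1"
  obtains K where "K \<ge> 0" "strong_type r K T"
proof -
  obtain C where C: "\<And>f. in_Lp r f \<Longrightarrow> in_Lp r (T f) \<and> Lp_norm r (T f) \<le> C * Lp_norm r f"
    using assms unfolding is_multiplier_extension_def by blast
  define C' where "C' = max C 0"
  have "(\<integral>\<^sup>+x. ennreal (cmod (T g x) powr r) \<partial>lebesgue)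
      \<le> ennreal (C' powr r) * (\<integral>\<^sup>+x. ennreal (cmod (g x) powr r) \<partial>lebesgue)" if g: "in_Lp r g" for g
  proof -
    define I where "I = (\<integral>\<^sup>+x. ennreal (cmod (g x) powr r) \<partial>lebesgue)"
    define J where "J = (\<integral>\<^sup>+x. ennreal (cmod (T g x) powr r) \<partial>lebesgue)"
    have fin: "I < \<infinity>" "J < \<infinity>" using g C[OF g] unfolding in_Lp_def I_def J_def by auto
    have "Lp_norm r (T g) \<le> C * Lp_norm r g" using C[OF g] by simp
    also have "\<dots> \<le> C' * Lp_norm r g"
      unfolding C'_def Lp_norm_def by (intro mult_right_mono) auto
    finally have "enn2real J powr (1/r) \<le> C' * enn2real I powr (1/r)"
      unfolding Lp_norm_def J_def I_def .
    then have "(enn2real J powr (1/r)) powr r \<le> (C' * enn2real I powr (1/r)) powr r"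
      using assms(2) by (intro powr_mono2) auto
    then have JI: "enn2real J \<le> C' powr r * enn2real I"
      using assms(2) unfolding C'_def by (simp add: powr_mult powr_powr)
    have "J = ennreal (enn2real J)" using fin by simp
    also have "\<dots> \<le> ennreal (C' powr r * enn2real I)" by (rule ennreal_leI[OF JI])
    also have "\<dots> = ennreal (C' powr r) * I" using fin by (simp add: ennreal_mult)
    finally show ?thesis unfolding I_def J_def .
  qed
  then have "strong_type r (C' powr r) T"
    using C unfolding strong_type_def by blast
  then show ?thesis by (rule that[rotated]) simp
qed

lemma emeasure_superlevel_le_Lp:
  fixes g :: "'a::euclidean_space \<Rightarrow> complex"
  assumes [measurable]: "g \<in> borel_measurable lebesgue" and "t > 0" "r > 0"
  shows "emeasure lebesgue {x. t < cmod (g x)}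
    \<le> ennreal (1 / t powr r) * (\<integral>\<^sup>+x. ennreal (cmod (g x) powr r) \<partial>lebesgue)"
proof -
  have S: "{x. t < cmod (g x)} \<in> sets lebesgue"
    by (rule sets_lebesgue_superlevel) measurable
  have "indicator {x. t < cmod (g x)} x \<le> ennreal (1 / t powr r) * ennreal (cmod (g x) powr r)" for x
  proof (cases "t < cmod (g x)")
    case True
    then have "1 \<le> 1 / t powr r * cmod (g x) powr r"
      using assms powr_mono2[of r t "cmod (g x)"] by (simp add: field_simps)
    then show ?thesis using True assms by (simp add: ennreal_mult[symmetric] ennreal_leI del: ennreal_mult)
  qed simp
  then have "emeasure lebesgue {x. t < cmod (g x)}
      \<le> (\<integral>\<^sup>+x. ennreal (1 / t powr r) * ennreal (cmod (g x) powr r) \<partial>lebesgue)"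
    using S by (simp add: nn_integral_mono flip: nn_integral_indicator)
  also have "\<dots> = ennreal (1 / t powr r) * (\<integral>\<^sup>+x. ennreal (cmod (g x) powr r) \<partial>lebesgue)"
    by (rule nn_integral_cmult) measurable
  finally show ?thesis .
qed

lemma strong_type_distribution:
  assumes "strong_type r K T" "in_Lp r g" "t > 0" "r > 0" "K \<ge> 0"
  shows "emeasure lebesgue {x. t < cmod (T g x)}
    \<le> ennreal (K / t powr r) * (\<integral>\<^sup>+x. ennreal (cmod (g x) powr r) \<partial>lebesgue)"
proof -
  have Tg: "in_Lp r (T g)"
    and bound: "(\<integral>\<^sup>+x. ennreal (cmod (T g x) powr r) \<partial>lebesgue)
       \<le> ennreal K * (\<integral>\<^sup>+x. ennreal (cmod (g x) powr r) \<partial>lebesgue)"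
    using assms(1,2) unfolding strong_type_def by auto
  have "emeasure lebesgue {x. t < cmod (T g x)}
      \<le> ennreal (1 / t powr r) * (\<integral>\<^sup>+x. ennreal (cmod (T g x) powr r) \<partial>lebesgue)"
    using Tg assms(3,4) unfolding in_Lp_def by (intro emeasure_superlevel_le_Lp) auto
  also have "\<dots> \<le> ennreal (1 / t powr r) * (ennreal K * (\<integral>\<^sup>+x. ennreal (cmod (g x) powr r) \<partial>lebesgue))"
    using bound by (rule mult_left_mono) simp
  also have "\<dots> = ennreal (K / t powr r) * (\<integral>\<^sup>+x. ennreal (cmod (g x) powr r) \<partial>lebesgue)"
    using assms(5) by (simp add: mult.assoc[symmetric] ennreal_mult[symmetric] del: ennreal_mult)
  finally show ?thesis .
qed

lemma in_Lp_imp_Lp_sum_space: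
  assumes "1 < p0" "p0 < p1"
  shows "in_Lp p0 g \<Longrightarrow> g \<in> Lp_sum_space" and "in_Lp p1 h \<Longrightarrow> h \<in> Lp_sum_space"
proof -
  have zero: "in_Lp r (\<lambda>_. 0)" for r unfolding in_Lp_def by simp
  show "in_Lp p0 g \<Longrightarrow> g \<in> Lp_sum_space"
    using assms zero unfolding Lp_sum_space_def by fastforce
  show "in_Lp p1 h \<Longrightarrow> h \<in> Lp_sum_space"
    using assms zero unfolding Lp_sum_space_def by fastforce
qed

lemma distribution_split_bound:
  fixes T :: "('a::euclidean_space \<Rightarrow> complex) \<Rightarrow> ('a \<Rightarrow> complex)"
  assumes additive: "additive_on_Lp_sum T"
    and T0: "strong_type p0 K0 T" and T1: "strong_type p1 K1 T"
    and exponents: "1 < p0" "p0 < p1" and K: "K0 \<ge> 0" "K1 \<ge> 0"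
    and fm [measurable]: "f \<in> borel_measurable lebesgue" and t: "t > 0"
    and fin: "moment_above p0 t (\<lambda>x. cmod (f x)) < \<infinity>" "moment_below p1 t (\<lambda>x. cmod (f x)) < \<infinity>"
  shows "T f \<in> borel_measurable lebesgue"
    and "emeasure lebesgue {x. 2 * t < cmod (T f x)}
       \<le> ennreal (K0 / t powr p0) * moment_above p0 t (\<lambda>x. cmod (f x))
         + ennreal (K1 / t powr p1) * moment_below p1 t (\<lambda>x. cmod (f x))"
proof -
  define f0 where "f0 x = (if t < cmod (f x) then f x else 0)" for x
  define f1 where "f1 x = (if t < cmod (f x) then 0 else f x)" for x
  have M0: "(\<integral>\<^sup>+x. ennreal (cmod (f0 x) powr p0) \<partial>lebesgue) = moment_above p0 t (\<lambda>x. cmod (f x))"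
    unfolding f0_def moment_above_def by (intro nn_integral_cong) auto
  have M1: "(\<integral>\<^sup>+x. ennreal (cmod (f1 x) powr p1) \<partial>lebesgue) = moment_below p1 t (\<lambda>x. cmod (f x))"
    unfolding f1_def moment_below_def by (intro nn_integral_cong) auto
  have [measurable]: "f0 \<in> borel_measurable lebesgue" unfolding f0_def by measurable
  have [measurable]: "f1 \<in> borel_measurable lebesgue" unfolding f1_def by measurable
  have L0: "in_Lp p0 f0" and L1: "in_Lp p1 f1"
    using M0 M1 fin unfolding in_Lp_def by simp_all
  have "(\<lambda>y. f0 y + f1 y) = f" unfolding f0_def f1_def by auto
  then have ae: "AE x in lebesgue. T f x = T f0 x + T f1 x"
    using additive in_Lp_imp_Lp_sum_space[OF exponents] L0 L1
    unfolding additive_on_Lp_sum_def by metis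
  have [measurable]: "T f0 \<in> borel_measurable lebesgue" "T f1 \<in> borel_measurable lebesgue"
    using T0 T1 L0 L1 unfolding strong_type_def in_Lp_def by auto
  have "(\<lambda>x. T f0 x + T f1 x) \<in> borel_measurable lebesgue" by measurable
  then show "T f \<in> borel_measurable lebesgue"
    by (rule borel_measurable_AE) (use ae in auto)
  have S: "{x. t < cmod (T f0 x)} \<in> sets lebesgue" "{x. t < cmod (T f1 x)} \<in> sets lebesgue"
    by (rule sets_lebesgue_superlevel, measurable)+
  from ae have "AE x in lebesgue. 2 * t < cmod (T f x) \<longrightarrow> x \<in> {x. t < cmod (T f0 x)} \<union> {x. t < cmod (T f1 x)}"
  proof eventually_elim
    case (elim x)
    then have "cmod (T f x) \<le> cmod (T f0 x) + cmod (T f1 x)" by (simp add: norm_triangle_ineq)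
    then show ?case by auto
  qed
  then have "emeasure lebesgue {x. 2 * t < cmod (T f x)}
      \<le> emeasure lebesgue ({x. t < cmod (T f0 x)} \<union> {x. t < cmod (T f1 x)})"
    using S by (intro emeasure_mono_AE) auto
  also have "\<dots> \<le> emeasure lebesgue {x. t < cmod (T f0 x)} + emeasure lebesgue {x. t < cmod (T f1 x)}"
    using S by (rule emeasure_subadditive)
  also have "\<dots> \<le> ennreal (K0 / t powr p0) * moment_above p0 t (\<lambda>x. cmod (f x))
         + ennreal (K1 / t powr p1) * moment_below p1 t (\<lambda>x. cmod (f x))"
    unfolding M0[symmetric] M1[symmetric] using exponents t K
    by (intro add_mono strong_type_distribution[OF T0 L0] strong_type_distribution[OF T1 L1]) auto
  finally show "emeasure lebesgue {x. 2 * t < cmod (T f x)}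
       \<le> ennreal (K0 / t powr p0) * moment_above p0 t (\<lambda>x. cmod (f x))
         + ennreal (K1 / t powr p1) * moment_below p1 t (\<lambda>x. cmod (f x))" .
qed

section \<open>Modular inequalities\<close>

lemma (in young_growth) modular_inequality:
  fixes T :: "('a::euclidean_space \<Rightarrow> complex) \<Rightarrow> ('a \<Rightarrow> complex)"
  assumes additive: "additive_on_Lp_sum T"
    and T0: "strong_type p0 K0 T" and T1: "strong_type p1 K1 T" and K: "K0 \<ge> 0" "K1 \<ge> 0"
    and exponents: "1 < p0" "p0 < p" "q < p1" "p0 < p1"
    and fm [measurable]: "f \<in> borel_measurable lebesgue"
    and modular: "(\<integral>\<^sup>+x. ennreal (\<Psi> (cmod (f x))) \<partial>lebesgue) \<le> 1"
  shows "T f \<in> borel_measurable lebesgue"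
    and "(\<integral>\<^sup>+x. ennreal (\<Psi> (cmod (T f x) / 4)) \<partial>lebesgue)
      \<le> ennreal (K0 / (1 - 2 powr (p0 - p)) + K1 * D / (1 - 2 powr (q - p1)))"
proof -
  have zm: "(\<lambda>x. cmod (f x)) \<in> borel_measurable lebesgue" by measurable
  have finite: "ennreal c * (\<integral>\<^sup>+x. ennreal (\<Psi> (cmod (f x))) \<partial>lebesgue) < \<infinity>" for c
    using modular mult_left_mono[OF modular, of "ennreal c"] by (simp add: order_le_less_trans)
  have fin0: "moment_above p0 t (\<lambda>x. cmod (f x)) < \<infinity>" if "t > 0" for t
  proof -
    have "moment_above p0 t (\<lambda>x. cmod (f x))
        \<le> ennreal (t powr p0 / \<Psi> t) * (\<integral>\<^sup>+x. ennreal (\<Psi> (cmod (f x))) \<partial>lebesgue)"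
      using exponents by (intro moment_above_le_modular[OF that _ zm]) auto
    then show ?thesis using finite by (rule order_le_less_trans)
  qed
  have fin1: "moment_below p1 t (\<lambda>x. cmod (f x)) < \<infinity>" if "t > 0" for t
  proof -
    have "moment_below p1 t (\<lambda>x. cmod (f x))
        \<le> ennreal (D * t powr p1 / \<Psi> t) * (\<integral>\<^sup>+x. ennreal (\<Psi> (cmod (f x))) \<partial>lebesgue)"
      using exponents by (intro moment_below_le_modular[OF that _ zm]) auto
    then show ?thesis using finite by (rule order_le_less_trans)
  qed
  note split = distribution_split_bound[OF additive T0 T1 exponents(1,4) K fm _ fin0 fin1]
  show Tm: "T f \<in> borel_measurable lebesgue" using split(1)[of 1] by simp
  have "(\<integral>\<^sup>+x. ennreal (\<Psi> (cmod (T f x) / 4)) \<partial>lebesgue)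
      \<le> ennreal (K0 / (1 - 2 powr (p0 - p)) + K1 * D / (1 - 2 powr (q - p1)))
          * (\<integral>\<^sup>+x. ennreal (\<Psi> (cmod (f x))) \<partial>lebesgue)"
    using Tm by (intro modular_bound_of_distribution[OF zm] split(2) K exponents(2,3)) auto
  also have "\<dots> \<le> ennreal (K0 / (1 - 2 powr (p0 - p)) + K1 * D / (1 - 2 powr (q - p1)))"
    using mult_left_mono[OF modular] by simp
  finally show "(\<integral>\<^sup>+x. ennreal (\<Psi> (cmod (T f x) / 4)) \<partial>lebesgue)
      \<le> ennreal (K0 / (1 - 2 powr (p0 - p)) + K1 * D / (1 - 2 powr (q - p1)))" .
qed

lemma (in young_growth) weak_modular_inequality:
  fixes T :: "('a::euclidean_space \<Rightarrow> complex) \<Rightarrow> ('a \<Rightarrow> complex)"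
  assumes additive: "additive_on_Lp_sum T"
    and T0: "strong_type p0 K0 T" and T1: "strong_type p1 K1 T" and K: "K0 \<ge> 0" "K1 \<ge> 0"
    and exponents: "1 < p0" "p0 < p" "q < p1" "p0 < p1"
    and fm [measurable]: "f \<in> borel_measurable lebesgue"
    and weak: "\<And>t. t > 0 \<Longrightarrow> ennreal (\<Psi> t) * emeasure lebesgue {x. t < cmod (f x)} \<le> 1"
  shows "T f \<in> borel_measurable lebesgue"
    and "t > 0 \<Longrightarrow> ennreal (\<Psi> t) * emeasure lebesgue {x. 2 * t < cmod (T f x)}
      \<le> ennreal (K0 * 2 powr p0 / (1 - 2 powr (p0 - p)) + K1 * D * 2 powr q / (1 - 2 powr (q - p1)))"
proof -
  have zm: "(\<lambda>x. cmod (f x)) \<in> borel_measurable lebesgue" by measurable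
  have r: "2 powr (p0 - p) < 1" "2 powr (q - p1) < (1::real)"
    using exponents powr_less_mono[of "p0 - p" 0 2] powr_less_mono[of "q - p1" 0 2] by auto
  define X0 where "X0 t = 2 powr p0 * t powr p0 / \<Psi> t / (1 - 2 powr (p0 - p))" for t
  define X1 where "X1 t = D * 2 powr q * t powr p1 / \<Psi> t / (1 - 2 powr (q - p1))" for t
  have X0: "moment_above p0 t (\<lambda>x. cmod (f x)) \<le> ennreal (X0 t)" if "t > 0" for t
    unfolding X0_def using exponents that by (intro moment_above_le_weak[OF zm weak]) auto
  have X1: "moment_below p1 t (\<lambda>x. cmod (f x)) \<le> ennreal (X1 t)" if "t > 0" for t
    unfolding X1_def using exponents that by (intro moment_below_le_weak[OF zm _ weak]) auto
  have fin0: "moment_above p0 t (\<lambda>x. cmod (f x)) < \<infinity>" if "t > 0" for t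
    using X0[OF that] by (simp add: order_le_less_trans)
  have fin1: "moment_below p1 t (\<lambda>x. cmod (f x)) < \<infinity>" if "t > 0" for t
    using X1[OF that] by (simp add: order_le_less_trans)
  note split = distribution_split_bound[OF additive T0 T1 exponents(1,4) K fm _ fin0 fin1]
  show "T f \<in> borel_measurable lebesgue" using split(1)[of 1] by simp
  assume t: "t > 0"
  have Pt: "\<Psi> t > 0" using pos t by auto
  have nonneg_parts: "K0 / t powr p0 \<ge> 0" "K1 / t powr p1 \<ge> 0" "X0 t \<ge> 0" "X1 t \<ge> 0"
    unfolding X0_def X1_def using K Pt r D_pos by auto
  have "emeasure lebesgue {x. 2 * t < cmod (T f x)}
      \<le> ennreal (K0 / t powr p0) * moment_above p0 t (\<lambda>x. cmod (f x))
        + ennreal (K1 / t powr p1) * moment_below p1 t (\<lambda>x. cmod (f x))"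
    using t by (intro split(2))
  also have "\<dots> \<le> ennreal (K0 / t powr p0) * ennreal (X0 t) + ennreal (K1 / t powr p1) * ennreal (X1 t)"
    using X0[OF t] X1[OF t] by (intro add_mono mult_left_mono) auto
  also have "\<dots> = ennreal (K0 / t powr p0 * X0 t + K1 / t powr p1 * X1 t)"
    using nonneg_parts
    by (simp only: ennreal_mult[symmetric] ennreal_plus[symmetric] mult_nonneg_nonneg)
  finally have "ennreal (\<Psi> t) * emeasure lebesgue {x. 2 * t < cmod (T f x)}
      \<le> ennreal (\<Psi> t) * ennreal (K0 / t powr p0 * X0 t + K1 / t powr p1 * X1 t)"
    by (rule mult_left_mono) simp
  also have "\<dots> = ennreal (\<Psi> t * (K0 / t powr p0 * X0 t + K1 / t powr p1 * X1 t))"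
    using nonneg_parts Pt
    by (simp only: ennreal_mult[symmetric] add_nonneg_nonneg mult_nonneg_nonneg less_imp_le)
  also have "\<Psi> t * (K0 / t powr p0 * X0 t + K1 / t powr p1 * X1 t)
      = K0 * 2 powr p0 / (1 - 2 powr (p0 - p)) + K1 * D * 2 powr q / (1 - 2 powr (q - p1))"
  proof -
    have cancel: "P * (c / T * (a * T / P / d)) = c * a / d" if "P > 0" "T > 0" "d > 0" for P T c a d :: real
      using that by (simp add: field_simps)
    have "1 - 2 powr (p0 - p) > 0" "1 - 2 powr (q - p1) > 0" using r by auto
    then show ?thesis
      unfolding X0_def X1_def distrib_left
      using cancel[OF Pt, of "t powr p0" "1 - 2 powr (p0 - p)" K0 "2 powr p0"]
        cancel[OF Pt, of "t powr p1" "1 - 2 powr (q - p1)" K1 "D * 2 powr q"] t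
      by (simp add: mult.assoc)
  qed
  finally show "ennreal (\<Psi> t) * emeasure lebesgue {x. 2 * t < cmod (T f x)}
      \<le> ennreal (K0 * 2 powr p0 / (1 - 2 powr (p0 - p)) + K1 * D * 2 powr q / (1 - 2 powr (q - p1)))" .
qed

lemma (in young_growth) modular_divide_le_one:
  assumes "v \<in> borel_measurable M" "\<And>x. v x \<ge> 0" "K \<ge> 1"
    and "(\<integral>\<^sup>+x. ennreal (\<Psi> (v x)) \<partial>M) \<le> ennreal K"
  shows "(\<integral>\<^sup>+x. ennreal (\<Psi> (v x / K)) \<partial>M) \<le> 1"
proof -
  have "(\<integral>\<^sup>+x. ennreal (\<Psi> (v x / K)) \<partial>M) \<le> (\<integral>\<^sup>+x. ennreal (1 / K) * ennreal (\<Psi> (v x)) \<partial>M)"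
    using divide_le[OF assms(2,3)] assms(3) nonneg[OF assms(2)]
    by (intro nn_integral_mono) (simp add: ennreal_mult[symmetric] ennreal_leI del: ennreal_mult)
  also have "\<dots> = ennreal (1 / K) * (\<integral>\<^sup>+x. ennreal (\<Psi> (v x)) \<partial>M)"
    using borel_measurable_comp[OF assms(1,2)] by (rule nn_integral_cmult)
  also have "\<dots> \<le> ennreal (1 / K) * ennreal K"
    using assms(4) by (rule mult_left_mono) simp
  also have "\<dots> = 1" using assms(3) by (simp add: ennreal_mult[symmetric] del: ennreal_mult)
  finally show ?thesis .
qed

lemma (in young_growth) weak_divide_le_one:
  assumes "u \<ge> 0" "K \<ge> 1" "ennreal (\<Psi> u) * m \<le> ennreal K"
  shows "ennreal (\<Psi> (u / K)) * m \<le> 1"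
proof -
  have "ennreal (\<Psi> (u / K)) * m \<le> ennreal (1 / K) * ennreal (\<Psi> u) * m"
    using divide_le[OF assms(1,2)] assms(2) nonneg[OF assms(1)]
    by (intro mult_right_mono) (simp_all add: ennreal_mult[symmetric] ennreal_leI del: ennreal_mult)
  also have "\<dots> \<le> ennreal (1 / K) * ennreal K"
    using assms(3) by (simp add: mult.assoc mult_left_mono)
  also have "\<dots> = 1" using assms(2) by (simp add: ennreal_mult[symmetric] del: ennreal_mult)
  finally show ?thesis .
qed

section \<open>Norm inequalities\<close>

lemma (in young_growth) interpolation_exponents:
  obtains p0 p1 where "1 < p0" "p0 < p" "q < p1" "p0 < p1"
  by (rule that[of "(1 + p) / 2" "q + p + 1"]) (use p_gt_1 q_nonneg in auto)

lemma (in young_growth) orlicz_set_image: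
  fixes T :: "('a::euclidean_space \<Rightarrow> complex) \<Rightarrow> ('a \<Rightarrow> complex)"
  assumes additive: "additive_on_Lp_sum T" and bounded: "\<And>r. r > 1 \<Longrightarrow> \<exists>K\<ge>0. strong_type r K T"
  obtains C where "C > 0"
    "\<And>f s. f \<in> borel_measurable lebesgue \<Longrightarrow> s \<in> orlicz_set \<Psi> f
       \<Longrightarrow> T f \<in> borel_measurable lebesgue \<and> C * s \<in> orlicz_set \<Psi> (T f)"
proof -
  obtain p0 p1 where exponents: "1 < p0" "p0 < p" "q < p1" "p0 < p1"
    by (rule interpolation_exponents)
  obtain K0 K1 where K: "K0 \<ge> 0" "K1 \<ge> 0" and T0: "strong_type p0 K0 T" and T1: "strong_type p1 K1 T"
    using bounded[of p0] bounded[of p1] exponents by auto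
  define M where "M = max 1 (K0 / (1 - 2 powr (p0 - p)) + K1 * D / (1 - 2 powr (q - p1)))"
  have M: "M \<ge> 1" unfolding M_def by simp
  have "T f \<in> borel_measurable lebesgue \<and> 4 * M * s \<in> orlicz_set \<Psi> (T f)"
    if fm: "f \<in> borel_measurable lebesgue" and s: "s \<in> orlicz_set \<Psi> f" for f s
  proof -
    have s0: "s > 0" and modular: "(\<integral>\<^sup>+x. ennreal (\<Psi> (cmod (f x) / s)) \<partial>lebesgue) \<le> 1"
      using s unfolding orlicz_set_def by auto
    interpret scaled: young_growth "\<lambda>y. \<Psi> (y / s)" p q D
      by (rule young_growth_rescale[OF young_growth_axioms s0])
    note key = scaled.modular_inequality[OF additive T0 T1 K exponents fm modular]
    have [measurable]: "T f \<in> borel_measurable lebesgue" by (rule key(1))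
    have "(\<integral>\<^sup>+x. ennreal (\<Psi> (cmod (T f x) / 4 / s)) \<partial>lebesgue) \<le> ennreal M"
      using key(2) unfolding M_def by (rule order_trans) simp
    then have "(\<integral>\<^sup>+x. ennreal (\<Psi> (cmod (T f x) / 4 / M / s)) \<partial>lebesgue) \<le> 1"
      using M by (intro scaled.modular_divide_le_one[where v = "\<lambda>x. cmod (T f x) / 4"]) auto
    then show ?thesis using M s0 unfolding orlicz_set_def by (simp add: mult.assoc)
  qed
  moreover have "4 * M > 0" using M by simp
  ultimately show ?thesis using that by blast
qed

lemma (in young_growth) weak_orlicz_set_image:
  fixes T :: "('a::euclidean_space \<Rightarrow> complex) \<Rightarrow> ('a \<Rightarrow> complex)"
  assumes additive: "additive_on_Lp_sum T" and bounded: "\<And>r. r > 1 \<Longrightarrow> \<exists>K\<ge>0. strong_type r K T"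
  obtains C where "C > 0"
    "\<And>f s. f \<in> borel_measurable lebesgue \<Longrightarrow> s \<in> weak_orlicz_set \<Psi> f
       \<Longrightarrow> T f \<in> borel_measurable lebesgue \<and> C * s \<in> weak_orlicz_set \<Psi> (T f)"
proof -
  obtain p0 p1 where exponents: "1 < p0" "p0 < p" "q < p1" "p0 < p1"
    by (rule interpolation_exponents)
  obtain K0 K1 where K: "K0 \<ge> 0" "K1 \<ge> 0" and T0: "strong_type p0 K0 T" and T1: "strong_type p1 K1 T"
    using bounded[of p0] bounded[of p1] exponents by auto
  define M where "M = max 1 (K0 * 2 powr p0 / (1 - 2 powr (p0 - p)) + K1 * D * 2 powr q / (1 - 2 powr (q - p1)))"
  have M: "M \<ge> 1" unfolding M_def by simp
  have "T f \<in> borel_measurable lebesgue \<and> 2 * M * s \<in> weak_orlicz_set \<Psi> (T f)"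
    if fm: "f \<in> borel_measurable lebesgue" and s: "s \<in> weak_orlicz_set \<Psi> f" for f s
  proof -
    have s0: "s > 0" and "(SUP t\<in>{0<..}. ennreal (\<Psi> (t / s)) * distrib_fun f t) \<le> 1"
      using s unfolding weak_orlicz_set_def by auto
    then have weak: "ennreal (\<Psi> (t / s)) * emeasure lebesgue {x. t < cmod (f x)} \<le> 1" if "t > 0" for t
      using that unfolding distrib_fun_def by (auto simp: SUP_le_iff)
    interpret scaled: young_growth "\<lambda>y. \<Psi> (y / s)" p q D
      by (rule young_growth_rescale[OF young_growth_axioms s0])
    note key = scaled.weak_modular_inequality[OF additive T0 T1 K exponents fm weak]
    have "ennreal (\<Psi> (u / (2 * M * s))) * distrib_fun (T f) u \<le> 1" if u: "u > 0" for u
    proof -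
      have "ennreal (\<Psi> (u / 2 / s)) * emeasure lebesgue {x. 2 * (u / 2) < cmod (T f x)}
          \<le> ennreal (K0 * 2 powr p0 / (1 - 2 powr (p0 - p)) + K1 * D * 2 powr q / (1 - 2 powr (q - p1)))"
        using key(2)[of "u / 2"] u by simp
      also have "\<dots> \<le> ennreal M" unfolding M_def by simp
      finally have "ennreal (\<Psi> (u / 2 / s)) * emeasure lebesgue {x. 2 * (u / 2) < cmod (T f x)} \<le> ennreal M" .
      then have "ennreal (\<Psi> (u / 2 / M / s)) * emeasure lebesgue {x. 2 * (u / 2) < cmod (T f x)} \<le> 1"
        using u M by (intro scaled.weak_divide_le_one[where u = "u / 2"]) auto
      then show ?thesis unfolding distrib_fun_def by (simp add: mult.assoc)
    qed
    then show ?thesis using key(1) M s0 unfolding weak_orlicz_set_def by (auto intro: SUP_least)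
  qed
  moreover have "2 * M > 0" using M by simp
  ultimately show ?thesis using that by blast
qed

lemma Inf_le_scaled_Inf:
  fixes S U :: "real set"
  assumes "S \<noteq> {}" "\<And>s. s \<in> S \<Longrightarrow> s > 0" "\<And>u. u \<in> U \<Longrightarrow> u > 0"
    and "\<And>s. s \<in> S \<Longrightarrow> c * s \<in> U" "0 < c" "c \<le> C"
  shows "Inf U \<le> C * Inf S"
proof -
  have "bdd_below U" using assms(3) by (intro bdd_belowI[of _ 0]) (auto intro: less_imp_le)
  then have "Inf U / c \<le> s" if "s \<in> S" for s
    using cInf_lower[OF assms(4)[OF that]] assms(5) by (simp add: field_simps)
  then have "Inf U / c \<le> Inf S" using assms(1) by (intro cInf_greatest) auto
  then have "Inf U \<le> c * Inf S" using assms(5) by (simp add: field_simps)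
  also have "\<dots> \<le> C * Inf S"
    using assms(1,2,6) by (intro mult_right_mono cInf_greatest) (auto intro: less_imp_le)
  finally show ?thesis .
qed

lemma orlicz_norm_le_of_scaled_set:
  assumes "in_orlicz \<Phi> f" "g \<in> borel_measurable lebesgue" "0 < c" "c \<le> C"
    and "\<And>s. s \<in> orlicz_set \<Phi> f \<Longrightarrow> c * s \<in> orlicz_set \<Phi> g"
  shows "in_orlicz \<Phi> g \<and> orlicz_norm \<Phi> g \<le> C * orlicz_norm \<Phi> f"
proof
  have ne: "orlicz_set \<Phi> f \<noteq> {}" using assms(1) unfolding in_orlicz_def by simp
  then show "in_orlicz \<Phi> g" using assms(2,5) unfolding in_orlicz_def by blast
  have pos: "\<And>s. s \<in> orlicz_set \<Phi> h \<Longrightarrow> s > 0" for h by (simp add: orlicz_set_def)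
  show "orlicz_norm \<Phi> g \<le> C * orlicz_norm \<Phi> f"
    unfolding orlicz_norm_def by (rule Inf_le_scaled_Inf[OF ne pos pos assms(5,3,4)])
qed

lemma weak_orlicz_norm_le_of_scaled_set:
  assumes "in_weak_orlicz \<Phi> f" "g \<in> borel_measurable lebesgue" "0 < c" "c \<le> C"
    and "\<And>s. s \<in> weak_orlicz_set \<Phi> f \<Longrightarrow> c * s \<in> weak_orlicz_set \<Phi> g"
  shows "in_weak_orlicz \<Phi> g \<and> weak_orlicz_norm \<Phi> g \<le> C * weak_orlicz_norm \<Phi> f"
proof
  have ne: "weak_orlicz_set \<Phi> f \<noteq> {}" using assms(1) unfolding in_weak_orlicz_def by simp
  then show "in_weak_orlicz \<Phi> g" using assms(2,5) unfolding in_weak_orlicz_def by blast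
  have pos: "\<And>s. s \<in> weak_orlicz_set \<Phi> h \<Longrightarrow> s > 0" for h by (simp add: weak_orlicz_set_def)
  show "weak_orlicz_norm \<Phi> g \<le> C * weak_orlicz_norm \<Phi> f"
    unfolding weak_orlicz_norm_def by (rule Inf_le_scaled_Inf[OF ne pos pos assms(5,3,4)])
qed

theorem mainTheorem2:
  fixes \<Phi> :: "real \<Rightarrow> real"
    and a :: "'a::euclidean_space \<Rightarrow> complex"
    and T :: "('a \<Rightarrow> complex) \<Rightarrow> ('a \<Rightarrow> complex)"
  assumes "strict_young \<Phi>"
    and "ess_bounded a"
    and "\<And>\<alpha>. mindex_abs \<alpha> \<le> DIM('a) div 2 + 1 \<Longrightarrow>
           \<exists>g. weak_mderiv (- {0}) \<alpha> a g \<and>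
               (SUP R\<in>{0<..}. ennreal (R powr (2 * real (mindex_abs \<alpha>) - real DIM('a))) *
                   (\<integral>\<^sup>+ \<xi>\<in>annulus R. ennreal ((cmod (g \<xi>))\<^sup>2) \<partial>lebesgue)) < \<infinity>"
    and "is_multiplier_extension a T"
  shows "\<exists>C>0. (\<forall>f. in_orlicz \<Phi> f \<longrightarrow>
                    in_orlicz \<Phi> (T f) \<and> orlicz_norm \<Phi> (T f) \<le> C * orlicz_norm \<Phi> f) \<and>
              (\<forall>f. in_weak_orlicz \<Phi> f \<longrightarrow>
                    in_weak_orlicz \<Phi> (T f) \<and> weak_orlicz_norm \<Phi> (T f) \<le> C * weak_orlicz_norm \<Phi> f)"
proof -
  obtain p q D where "young_growth \<Phi> p q D" using assms(1) by (rule strict_young_growth)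
  then interpret young_growth \<Phi> p q D .
  have additive: "additive_on_Lp_sum T" using assms(4) by (rule multiplier_extension_additive)
  have bounded: "\<exists>K\<ge>0. strong_type r K T" if "r > 1" for r
    using multiplier_extension_strong_type[OF assms(4) that] by blast
  obtain Cs where Cs: "Cs > 0" "\<And>f s. f \<in> borel_measurable lebesgue \<Longrightarrow> s \<in> orlicz_set \<Phi> f
       \<Longrightarrow> T f \<in> borel_measurable lebesgue \<and> Cs * s \<in> orlicz_set \<Phi> (T f)"
    using orlicz_set_image[OF additive bounded] by blast
  obtain Cw where Cw: "Cw > 0" "\<And>f s. f \<in> borel_measurable lebesgue \<Longrightarrow> s \<in> weak_orlicz_set \<Phi> f
       \<Longrightarrow> T f \<in> borel_measurable lebesgue \<and> Cw * s \<in> weak_orlicz_set \<Phi> (T f)"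
    using weak_orlicz_set_image[OF additive bounded] by blast
  define C where "C = max Cs Cw"
  have "in_orlicz \<Phi> (T f) \<and> orlicz_norm \<Phi> (T f) \<le> C * orlicz_norm \<Phi> f" if f: "in_orlicz \<Phi> f" for f
    using f Cs f[unfolded in_orlicz_def]
    by (intro orlicz_norm_le_of_scaled_set[of \<Phi> f _ Cs]) (auto simp: C_def in_orlicz_def)
  moreover have "in_weak_orlicz \<Phi> (T f) \<and> weak_orlicz_norm \<Phi> (T f) \<le> C * weak_orlicz_norm \<Phi> f"
    if f: "in_weak_orlicz \<Phi> f" for f
    using f Cw f[unfolded in_weak_orlicz_def]
    by (intro weak_orlicz_norm_le_of_scaled_set[of \<Phi> f _ Cw]) (auto simp: C_def in_weak_orlicz_def)
  moreover have "C > 0" using Cs(1) by (simp add: C_def)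
  ultimately show ?thesis by blast
qed

end
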